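(* Let $(\mathcal A,\mathbb E)$ be a $B$-valued probability space and $a\in\mathcal A$ with $\mathbb E(a)\in B^\times$. Then $$U_a:=S_a^{-1}\cdot I\cdot S_a=(K^a\cdot I)\circ(I\cdot K^a)^{\circ-1}=(M^a\cdot I)\circ(I\cdot M^a)^{\circ-1}.$$
   Context: $B$ is a unital algebra over a field $\mathbb K$ of characteristic zero. $\mathrm{Mult}[[B]]$: sequences $f=(f_n)_{n\ge0}$ of multilinear maps $f_n:B^n\to B$. Product $(f\cdot g)_n(x_1,\dots,x_n)=\sum_{k=0}^n f_k(x_1,\dots,x_k)g_{n-k}(x_{k+1},\dots,x_n)$, $h^{-1}$ multiplicative inverse; for $g_0=0$, composition $(f\circ g)_n(x_1,\dots,x_n)=\sum_{l\ge0}\sum_{k_1+\dots+k_l=n,k_i\ge1}f_l(g_{k_1}(x_1,\dots,x_{k_1}),\dots,g_{k_l}(x_{n-k_l+1},\dots,x_n))$, $f^{\circ-1}$ compositional inverse; $I=(\delta_{n,1}\mathrm{id}_B)$. For $f=I\cdot F$ with $F_0\in B^\times$, the S-transform $S_f$ is defined by $f^{\circ-1}=I\cdot S_f$. $B$-valued probability space $(\mathcal A,\mathbb E)$: $\mathcal A$ a unital $\mathbb K$-algebra and $B$-bimodule with all mixed triple products associative; $\mathbb E:\mathcal A\to B$ linear, unital, $\mathbb E(xay)=x\mathbb E(a)y$. Cumulants: with planar binary trees $Y_0=\{|\}$, $Y_n=\{\sigma\vee\tau:|\sigma|+|\tau|=n-1\}$, each $\tau\in Y_n$ ($n\ge1$)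 uniquely $\tau_1\vee(\tau_2\vee(\cdots\vee(\tau_k\vee|)))$, $j_i=|\tau_1|+\dots+|\tau_i|+i$, multilinear $\kappa_n:\mathcal A^n\to B$ are defined by $\mathbb E(a_1\cdots a_n)=\sum_{\tau\in Y_n}\kappa_\tau(a_1,\dots,a_n)$ with $\kappa_|=1$, $\kappa_\tau(a_1,\dots,a_n)=\kappa_k(\kappa_{\tau_1}(a_1,\dots,a_{j_1-1})a_{j_1},\dots,\kappa_{\tau_k}(a_{j_{k-1}+1},\dots,a_{j_k-1})a_{j_k})$. For $a\in\mathcal A$: moment series $M^a_n(x_1,\dots,x_n)=\mathbb E(ax_1ax_2a\cdots x_na)$; $K^a_n(x_1,\dots,x_n)=\kappa_{n+1}(a,x_1a,\dots,x_na)$; $k^a=I\cdot K^a$, i.e. $k^a_n(x_1,\dots,x_n)=\kappa_n(x_1a,\dots,x_na)$; $S_a:=S_{k^a}$. *)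

theory Defs
  imports Main
begin

text \<open>The field K is a type 'k of class field_char_0; a K-algebra structure on a
unital ring is given by an explicit scalar multiplication s.\<close>

definition kalg :: "('k::field \<Rightarrow> 'b::ring_1 \<Rightarrow> 'b) \<Rightarrow> bool" where
  "kalg s \<longleftrightarrow>
     (\<forall>c x y. s c (x + y) = s c x + s c y) \<and>
     (\<forall>c d x. s (c + d) x = s c x + s d x) \<and>
     (\<forall>c d x. s (c * d) x = s c (s d x)) \<and>
     (\<forall>x. s 1 x = x) \<and>
     (\<forall>c x y. s c (x * y) = s c x * y \<and> s c (x * y) = x * s c y)"

definition bunit :: "'b::ring_1 \<Rightarrow> bool" where
  "bunit x \<longleftrightarrow> (\<exists>y. x * y = 1 \<and> y * x = 1)"

text \<open>la = left action of B on A, ra = right action of A by B.\<close>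

definition bprob_space ::
  "('k::field_char_0 \<Rightarrow> 'b::ring_1 \<Rightarrow> 'b) \<Rightarrow> ('k \<Rightarrow> 'a::ring_1 \<Rightarrow> 'a) \<Rightarrow>
   ('b \<Rightarrow> 'a \<Rightarrow> 'a) \<Rightarrow> ('a \<Rightarrow> 'b \<Rightarrow> 'a) \<Rightarrow> ('a \<Rightarrow> 'b) \<Rightarrow> bool" where
  "bprob_space sB sA la ra E \<longleftrightarrow>
     kalg sB \<and> kalg sA \<and>
     \<comment> \<open>bimodule, K-bilinear, unital\<close>
     (\<forall>x y a. la (x + y) a = la x a + la y a) \<and>
     (\<forall>x a b. la x (a + b) = la x a + la x b) \<and>
     (\<forall>a b x. ra (a + b) x = ra a x + ra b x) \<and>
     (\<forall>a x y. ra a (x + y) = ra a x + ra a y) \<and>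
     (\<forall>c x a. la (sB c x) a = sA c (la x a) \<and> la x (sA c a) = sA c (la x a)) \<and>
     (\<forall>c x a. ra a (sB c x) = sA c (ra a x) \<and> ra (sA c a) x = sA c (ra a x)) \<and>
     (\<forall>a. la 1 a = a) \<and> (\<forall>a. ra a 1 = a) \<and>
     \<comment> \<open>all mixed triple products associative\<close>
     (\<forall>x y a. la (x * y) a = la x (la y a)) \<and>
     (\<forall>x y a. ra a (x * y) = ra (ra a x) y) \<and>
     (\<forall>x y a. ra (la x a) y = la x (ra a y)) \<and>
     (\<forall>x a b. la x (a * b) = la x a * b) \<and>
     (\<forall>x a b. ra (a * b) x = a * ra b x) \<and>
     (\<forall>x a b. ra a x * b = a * la x b) \<and>
     \<comment> \<open>the conditional expectation\<close>
     (\<forall>a b. E (a + b) = E a + E b) \<and>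
     (\<forall>c a. E (sA c a) = sB c (E a)) \<and>
     E 1 = 1 \<and>
     (\<forall>x a y. E (la x (ra a y)) = x * E a * y)"

section \<open>Mult[[B]]: a sequence (f_n) of maps B^n \<rightarrow> B is a function on lists, f_n(x1..xn) = f [x1,..,xn]\<close>

definition mlin :: "('k::field \<Rightarrow> 'b::ring_1 \<Rightarrow> 'b) \<Rightarrow> ('b list \<Rightarrow> 'b) \<Rightarrow> bool" where
  "mlin sB f \<longleftrightarrow>
     (\<forall>xs ys x y. f (xs @ (x + y) # ys) = f (xs @ x # ys) + f (xs @ y # ys)) \<and>
     (\<forall>xs ys c x. f (xs @ sB c x # ys) = sB c (f (xs @ x # ys)))"

definition mprod :: "('b::ring_1 list \<Rightarrow> 'b) \<Rightarrow> ('b list \<Rightarrow> 'b) \<Rightarrow> 'b list \<Rightarrow> 'b" where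
  "mprod f g xs = (\<Sum>k = 0..length xs. f (take k xs) * g (drop k xs))"

definition mone :: "'b::ring_1 list \<Rightarrow> 'b" where
  "mone xs = (if xs = [] then 1 else 0)"

definition mI :: "'b::ring_1 list \<Rightarrow> 'b" where
  "mI xs = (case xs of [x] \<Rightarrow> x | _ \<Rightarrow> 0)"

definition mcomp :: "('b::ring_1 list \<Rightarrow> 'b) \<Rightarrow> ('b list \<Rightarrow> 'b) \<Rightarrow> 'b list \<Rightarrow> 'b" where
  "mcomp f g xs = (\<Sum>bs \<in> {bs. concat bs = xs \<and> [] \<notin> set bs}. f (map g bs))"

definition minv :: "('k::field \<Rightarrow> 'b::ring_1 \<Rightarrow> 'b) \<Rightarrow> ('b list \<Rightarrow> 'b) \<Rightarrow> 'b list \<Rightarrow> 'b" where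
  "minv sB h = (THE g. mlin sB g \<and> mprod h g = mone \<and> mprod g h = mone)"

definition mcinv :: "('k::field \<Rightarrow> 'b::ring_1 \<Rightarrow> 'b) \<Rightarrow> ('b list \<Rightarrow> 'b) \<Rightarrow> 'b list \<Rightarrow> 'b" where
  "mcinv sB f = (THE g. mlin sB g \<and> g [] = 0 \<and> mcomp f g = mI \<and> mcomp g f = mI)"

definition Strans :: "('k::field \<Rightarrow> 'b::ring_1 \<Rightarrow> 'b) \<Rightarrow> ('b list \<Rightarrow> 'b) \<Rightarrow> 'b list \<Rightarrow> 'b" where
  "Strans sB f = (THE S. mcinv sB f = mprod mI S)"

datatype ptree = Lf | Nd ptree ptree

fun tsize :: "ptree \<Rightarrow> nat" where
  "tsize Lf = 0"
| "tsize (Nd l r) = tsize l + tsize r + 1"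

text \<open>ktree kap la tau as = kappa_tau(a_1..a_n); kblocks lists the arguments
 kappa_{tau_i}(segment) a_{j_i} along the right spine.\<close>
fun ktree :: "('a list \<Rightarrow> 'b::ring_1) \<Rightarrow> ('b \<Rightarrow> 'a \<Rightarrow> 'a) \<Rightarrow> ptree \<Rightarrow> 'a list \<Rightarrow> 'b"
and kblocks :: "('a list \<Rightarrow> 'b::ring_1) \<Rightarrow> ('b \<Rightarrow> 'a \<Rightarrow> 'a) \<Rightarrow> ptree \<Rightarrow> 'a list \<Rightarrow> 'a list" where
  "ktree kap la Lf as = 1"
| "ktree kap la (Nd l r) as =
     kap (la (ktree kap la l (take (tsize l) as)) (as ! tsize l) # kblocks kap la r (drop (tsize l + 1) as))"
| "kblocks kap la Lf as = []"
| "kblocks kap la (Nd l r) as =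
     la (ktree kap la l (take (tsize l) as)) (as ! tsize l) # kblocks kap la r (drop (tsize l + 1) as)"

definition cumulants :: "('b::ring_1 \<Rightarrow> 'a::ring_1 \<Rightarrow> 'a) \<Rightarrow> ('a \<Rightarrow> 'b) \<Rightarrow> 'a list \<Rightarrow> 'b" where
  "cumulants la E = (THE kap. kap [] = 0 \<and>
      (\<forall>as. E (prod_list as) = (\<Sum>\<tau> \<in> {\<tau>. tsize \<tau> = length as}. ktree kap la \<tau> as)))"

text \<open>Moment series M^a(x1..xn) = E(a x1 a x2 a ... xn a).\<close>
definition mword :: "('a::ring_1 \<Rightarrow> 'b \<Rightarrow> 'a) \<Rightarrow> 'a \<Rightarrow> 'b list \<Rightarrow> 'a" where
  "mword ra a xs = foldl (\<lambda>w x. ra w x * a) a xs"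

definition Mser :: "('a::ring_1 \<Rightarrow> 'b \<Rightarrow> 'a) \<Rightarrow> ('a \<Rightarrow> 'b) \<Rightarrow> 'a \<Rightarrow> 'b list \<Rightarrow> 'b" where
  "Mser ra E a xs = E (mword ra a xs)"

definition Kser :: "('b::ring_1 \<Rightarrow> 'a::ring_1 \<Rightarrow> 'a) \<Rightarrow> ('a \<Rightarrow> 'b) \<Rightarrow> 'a \<Rightarrow> 'b list \<Rightarrow> 'b" where
  "Kser la E a xs = cumulants la E (a # map (\<lambda>x. la x a) xs)"

definition kser :: "('b::ring_1 \<Rightarrow> 'a::ring_1 \<Rightarrow> 'a) \<Rightarrow> ('a \<Rightarrow> 'b) \<Rightarrow> 'a \<Rightarrow> 'b list \<Rightarrow> 'b" where
  "kser la E a = mprod mI (Kser la E a)"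

definition Sa :: "('k::field \<Rightarrow> 'b::ring_1 \<Rightarrow> 'b) \<Rightarrow> ('b \<Rightarrow> 'a::ring_1 \<Rightarrow> 'a) \<Rightarrow> ('a \<Rightarrow> 'b) \<Rightarrow> 'a \<Rightarrow> 'b list \<Rightarrow> 'b" where
  "Sa sB la E a = Strans sB (kser la E a)"

end

theory Submission
  imports Defs
begin

text \<open>Grouping the planar binary trees according to the blocks of their right spine turns the
  moment-cumulant relation into the functional equation \<open>M = N \<cdot> (K \<circ> (I \<cdot> N))\<close> with
  \<open>N = 1 + M \<cdot> I\<close> (\<open>M = M\<^sup>a\<close>, \<open>K = K\<^sup>a\<close>). Together with the rule
  \<open>(f \<cdot> g) \<circ> h = (f \<circ> h) \<cdot> (g \<circ> h)\<close> it gives \<open>I \<cdot> M = (I \<cdot> K) \<circ> (I \<cdot> N)\<close> and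
  \<open>M \<cdot> I = (K \<cdot> I) \<circ> (I \<cdot> N)\<close>, so composing with the inverse of \<open>I \<cdot> N\<close> shows
  \<open>(K \<cdot> I) \<circ> (I \<cdot> K)\<^sup>\<circ>\<^sup>-\<^sup>1 = (M \<cdot> I) \<circ> (I \<cdot> M)\<^sup>\<circ>\<^sup>-\<^sup>1\<close>. For the first identity write
  \<open>(I \<cdot> K)\<^sup>\<circ>\<^sup>-\<^sup>1 = I \<cdot> S\<close>; the same rule shows \<open>K \<circ> (I \<cdot> S) = S\<^sup>-\<^sup>1\<close>, hence
  \<open>(K \<cdot> I) \<circ> (I \<cdot> S) = S\<^sup>-\<^sup>1 \<cdot> I \<cdot> S\<close>.

  Inverses are constructed degree by degree by recursion on the length of the argument list, and
  identified with the descriptions of \<open>minv\<close>, \<open>mcinv\<close> and \<open>cumulants\<close> by uniqueness.\<close>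

lemma length_recursion_exists:
  fixes \<Phi> :: "('x list \<Rightarrow> 'a) \<Rightarrow> 'x list \<Rightarrow> 'a"
  assumes "\<And>f g xs. (\<And>ys. length ys < length xs \<Longrightarrow> f ys = g ys) \<Longrightarrow> \<Phi> f xs = \<Phi> g xs"
  shows "\<exists>f. \<forall>xs. f xs = \<Phi> f xs"
proof -
  have "adm_wf (measure length) \<Phi>" unfolding adm_wf_def in_measure by (blast intro: assms)
  then have "wfrec (measure length) \<Phi> = \<Phi> (wfrec (measure length) \<Phi>)"
    by (rule wfrec_fixpoint[OF wf_measure])
  then have "wfrec (measure length) \<Phi> xs = \<Phi> (wfrec (measure length) \<Phi>) xs" for xs
    by (rule fun_cong)
  then show ?thesis by blast
qed

section \<open>Products of series\<close>

lemma mprod_Nil[simp]: "mprod f g [] = f [] * g []"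
  by (simp add: mprod_def)

lemma mprod_Cons: "mprod f g (x#xs) = f [] * g (x#xs) + mprod (\<lambda>ys. f (x#ys)) g xs"
  unfolding mprod_def
  by (simp add: atLeast0AtMost sum.atMost_Suc_shift del: sum.atMost_Suc)

lemma mprod_mult_add_left:
  "mprod (\<lambda>ys. c * f ys + g ys) h xs = c * mprod f h xs + mprod g h xs"
  unfolding mprod_def by (simp add: algebra_simps sum.distrib sum_distrib_left)

lemma mprod_diff_left: "mprod (\<lambda>ys. f ys - g ys) h xs = mprod f h xs - mprod g h xs"
  unfolding mprod_def by (simp add: algebra_simps sum_subtractf)

lemma mprod_diff_right: "mprod h (\<lambda>ys. f ys - g ys) xs = mprod h f xs - mprod h g xs"
  unfolding mprod_def by (simp add: algebra_simps sum_subtractf)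

lemma mprod_zero_left[simp]: "mprod (\<lambda>_. 0) h = (\<lambda>_. 0)"
  unfolding mprod_def by (simp add: fun_eq_iff)

lemma mprod_assoc: "mprod (mprod f g) h = mprod f (mprod g h)"
proof
  fix xs show "mprod (mprod f g) h xs = mprod f (mprod g h) xs"
  proof (induction xs arbitrary: f g h)
    case Nil then show ?case by (simp add: mult.assoc)
  next
    case (Cons x xs)
    have sh: "(\<lambda>ys. mprod f g (x#ys)) = (\<lambda>ys. f [] * g (x#ys) + mprod (\<lambda>ys. f (x#ys)) g ys)"
      by (simp add: mprod_Cons)
    have "mprod (mprod f g) h (x#xs) = f [] * g [] * h (x#xs) + mprod (\<lambda>ys. f [] * g (x#ys) + mprod (\<lambda>ys. f (x#ys)) g ys) h xs"
      by (simp only: mprod_Cons sh mprod_Nil)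
    also have "\<dots> = f [] * g [] * h (x#xs) + (f [] * mprod (\<lambda>ys. g (x#ys)) h xs + mprod (mprod (\<lambda>ys. f (x#ys)) g) h xs)"
      by (simp only: mprod_mult_add_left)
    also have "\<dots> = f [] * (g [] * h (x#xs) + mprod (\<lambda>ys. g (x#ys)) h xs) + mprod (\<lambda>ys. f (x#ys)) (mprod g h) xs"
      by (simp add: Cons.IH algebra_simps)
    also have "\<dots> = mprod f (mprod g h) (x#xs)"
      by (simp only: mprod_Cons)
    finally show ?case .
  qed
qed

lemma mone_Nil[simp]: "mone [] = 1" and mone_Cons[simp]: "mone (x#xs) = 0"
  by (simp_all add: mone_def)

lemma mI_simps[simp]: "mI [] = 0" "mI [x] = x" "mI (x#y#ys) = 0"
  by (simp_all add: mI_def)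

lemma mprod_mone_left[simp]: "mprod mone f = f"
proof
  fix xs show "mprod mone f xs = f xs"
    by (cases xs) (simp_all add: mprod_Cons)
qed

lemma mprod_mone_right[simp]: "mprod f mone = f"
proof
  fix xs show "mprod f mone xs = f xs"
    by (induction xs arbitrary: f) (simp_all add: mprod_Cons)
qed

lemma mprod_mI_left_Cons[simp]: "mprod mI f (x#xs) = x * f xs"
proof -
  have "(\<lambda>ys. mI (x#ys)) = (\<lambda>ys. x * mone ys)"
    by (auto simp: fun_eq_iff mI_def split: list.split)
  then show ?thesis
    by (simp add: mprod_Cons mprod_mult_add_left[where g="\<lambda>_. 0", simplified])
qed

lemma mprod_mI_right: "mprod f mI xs = (if xs = [] then 0 else f (butlast xs) * last xs)"
proof (induction xs arbitrary: f)
  case Nil then show ?case by simp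
next
  case (Cons x xs)
  show ?case
  proof (cases xs)
    case Nil
    then show ?thesis by (simp add: mprod_Cons)
  next
    case (Cons y ys)
    then show ?thesis using Cons.IH[of "\<lambda>ys. f (x#ys)"] by (simp add: mprod_Cons)
  qed
qed

lemma mprod_mI_cancel:
  assumes "mprod mI f = mprod mI g" shows "f = g"
proof
  fix xs
  have "mprod mI f (1#xs) = mprod mI g (1#xs)" using assms by simp
  then show "f xs = g xs" by simp
qed

lemma mprod_inverse_unique:
  assumes "mprod h g = mone" "mprod g' h = mone"
  shows "g' = g"
proof -
  have "g' = mprod g' mone" by simp
  also have "\<dots> = mprod g' (mprod h g)" by (simp only: assms(1))
  also have "\<dots> = mprod (mprod g' h) g" by (simp only: mprod_assoc)
  also have "\<dots> = g" by (simp only: assms(2) mprod_mone_left)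
  finally show ?thesis .
qed

definition binv :: "'b::ring_1 \<Rightarrow> 'b" where
  "binv x = (THE y. x * y = 1 \<and> y * x = 1)"

lemma binv_inverse: assumes "bunit x" shows "x * binv x = 1" "binv x * x = 1"
proof -
  obtain y where y: "x * y = 1" "y * x = 1" using assms by (auto simp: bunit_def)
  have "binv x = y" unfolding binv_def
  proof (rule the_equality)
    show "x * y = 1 \<and> y * x = 1" using y by simp
    fix z assume z: "x * z = 1 \<and> z * x = 1"
    have "z = z * (x * y)" using y by simp
    also have "\<dots> = y" using z by (simp flip: mult.assoc)
    finally show "z = y" .
  qed
  then show "x * binv x = 1" "binv x * x = 1" using y by auto
qed

lemma bunit_binv: "bunit x \<Longrightarrow> bunit (binv x)"
  using binv_inverse unfolding bunit_def by blast

lemma bunit_one[simp]: "bunit 1" by (auto simp: bunit_def)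

lemma take_append_Cons: "take k (xs @ w # ys) = (if k \<le> length xs then take k xs else xs @ w # take (k - length xs - 1) ys)"
  by (induction xs arbitrary: k) (auto simp: take_Cons' split: nat.split)
lemma drop_append_Cons: "drop k (xs @ w # ys) = (if k \<le> length xs then drop k xs @ w # ys else drop (k - length xs - 1) ys)"
  by (induction xs arbitrary: k) (auto simp: drop_Cons' split: nat.split)

section \<open>Multilinearity\<close>

locale scalars =
  fixes sB :: "'k::field_char_0 \<Rightarrow> 'b::ring_1 \<Rightarrow> 'b"
  assumes kalg: "kalg sB"
begin

lemma sB_add: "sB c (x + y) = sB c x + sB c y" using kalg by (simp add: kalg_def)
lemma sB_one: "sB 1 x = x" using kalg by (simp add: kalg_def)
lemma sB_ml: "sB c (x * y) = sB c x * y" using kalg unfolding kalg_def by blast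
lemma sB_mr: "sB c (x * y) = x * sB c y" using kalg unfolding kalg_def by blast
lemma sB_zero[simp]: "sB c 0 = 0"
  using sB_add[of c 0 0] by simp
lemma sB_minus: "sB c (- x) = - sB c x"
  using sB_add[of c x "-x"] by (simp add: add_eq_0_iff2)
lemma sB_diff: "sB c (x - y) = sB c x - sB c y"
  using sB_add[of c x "-y"] sB_minus by simp
lemma sB_sum: "sB c (sum f A) = sum (\<lambda>i. sB c (f i)) A"
  by (induction A rule: infinite_finite_induct) (simp_all add: sB_add)

definition klinear :: "('b \<Rightarrow> 'b) \<Rightarrow> bool" where
  "klinear T \<longleftrightarrow> (\<forall>c x y. T (sB c x + y) = sB c (T x) + T y)"

lemma klinearD: "klinear T \<Longrightarrow> T (sB c x + y) = sB c (T x) + T y" by (simp add: klinear_def)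

lemma klinear_map_zero: "klinear T \<Longrightarrow> T 0 = 0"
  using klinearD[of T 1 0 0] by (simp add: sB_one)

lemma klinear_map_add: "klinear T \<Longrightarrow> T (x + y) = T x + T y"
  using klinearD[of T 1 x y] by (simp add: sB_one)

lemma klinear_id: "klinear (\<lambda>w. w)" by (simp add: klinear_def)
lemma klinear_zero: "klinear (\<lambda>w. 0)" by (simp add: klinear_def)
lemma klinear_add: "klinear T \<Longrightarrow> klinear U \<Longrightarrow> klinear (\<lambda>w. T w + U w)"
  by (simp add: klinear_def sB_add algebra_simps)
lemma klinear_mult_left: "klinear T \<Longrightarrow> klinear (\<lambda>w. d * T w)"
  by (simp add: klinear_def sB_mr algebra_simps)
lemma klinear_mult_right: "klinear T \<Longrightarrow> klinear (\<lambda>w. T w * d)"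
  by (simp add: klinear_def sB_ml algebra_simps)
lemma klinear_sum: "(\<And>i. i \<in> A \<Longrightarrow> klinear (T i)) \<Longrightarrow> klinear (\<lambda>w. \<Sum>i\<in>A. T i w)"
proof (induction A rule: infinite_finite_induct)
  case (infinite A) then show ?case by (simp add: klinear_zero)
next
  case empty then show ?case by (simp add: klinear_zero)
next
  case (insert x F) then show ?case by (simp add: klinear_add)
qed

definition multilinear :: "('b list \<Rightarrow> 'b) \<Rightarrow> bool" where
  "multilinear f \<longleftrightarrow> (\<forall>xs ys. klinear (\<lambda>w. f (xs @ w # ys)))"

lemma multilinearD: "multilinear f \<Longrightarrow> klinear (\<lambda>w. f (xs @ w # ys))" by (simp add: multilinear_def)

lemma mlin_iff_multilinear: "mlin sB f \<longleftrightarrow> multilinear f"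
proof
  assume m: "mlin sB f"
  show "multilinear f" unfolding multilinear_def klinear_def
    using m by (simp add: mlin_def)
next
  assume l: "multilinear f"
  show "mlin sB f" unfolding mlin_def
  proof (intro conjI allI)
    fix xs ys x y
    show "f (xs @ (x + y) # ys) = f (xs @ x # ys) + f (xs @ y # ys)"
      using klinear_map_add[OF multilinearD[OF l]] by simp
    fix c
    show "f (xs @ sB c x # ys) = sB c (f (xs @ x # ys))"
      using klinearD[OF multilinearD[OF l, of xs ys], of c x 0] klinear_map_zero[OF multilinearD[OF l, of xs ys]] by simp
  qed
qed

lemma multilinear_mone: "multilinear mone"
  by (simp add: multilinear_def mone_def klinear_zero)

lemma multilinear_mI: "multilinear mI"
  unfolding multilinear_def
proof (intro allI)
  fix xs ys :: "'b list"
  show "klinear (\<lambda>w. mI (xs @ w # ys))"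
  proof (cases xs)
    case Nil
    then show ?thesis by (cases ys) (simp_all add: klinear_id klinear_zero)
  next
    case (Cons z zs)
    have "mI (xs @ w # ys) = 0" for w using Cons by (cases zs) simp_all
    then show ?thesis by (simp add: klinear_zero)
  qed
qed

lemma multilinear_add: "multilinear f \<Longrightarrow> multilinear g \<Longrightarrow> multilinear (\<lambda>xs. f xs + g xs)"
  by (simp add: multilinear_def klinear_add)
lemma multilinear_Cons: assumes "multilinear f" shows "multilinear (\<lambda>ys. f (x # ys))"
  unfolding multilinear_def
proof (intro allI)
  fix xs ys show "klinear (\<lambda>w. f (x # xs @ w # ys))" using multilinearD[OF assms, of "x#xs" ys] by simp
qed

lemma multilinear_mprod: assumes f: "multilinear f" and g: "multilinear g" shows "multilinear (mprod f g)"
  unfolding multilinear_def mprod_def length_append length_Cons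
proof (intro allI klinear_sum)
  fix xs ys :: "'b list" and k assume "k \<in> {0..length xs + Suc (length ys)}"
  show "klinear (\<lambda>w. f (take k (xs @ w # ys)) * g (drop k (xs @ w # ys)))"
  proof (cases "k \<le> length xs")
    case True
    then show ?thesis by (simp add: take_append_Cons drop_append_Cons klinear_mult_left multilinearD[OF g])
  next
    case False
    then have "take k (xs @ w # ys) = xs @ w # take (k - length xs - 1) ys"
      "drop k (xs @ w # ys) = drop (k - length xs - 1) ys" for w
      by (simp_all only: take_append_Cons drop_append_Cons if_False)
    then show ?thesis by (simp add: klinear_mult_right multilinearD[OF f])
  qed
qed

definition trunc :: "nat \<Rightarrow> ('b list \<Rightarrow> 'b) \<Rightarrow> 'b list \<Rightarrow> 'b" where
  "trunc n f xs = (if length xs \<le> n then f xs else 0)"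

lemma multilinear_trunc_iff: "multilinear (trunc n f) \<longleftrightarrow> (\<forall>xs ys. length xs + length ys < n \<longrightarrow> klinear (\<lambda>w. f (xs @ w # ys)))"
proof
  assume a: "multilinear (trunc n f)"
  show "\<forall>xs ys. length xs + length ys < n \<longrightarrow> klinear (\<lambda>w. f (xs @ w # ys))"
  proof (intro allI impI)
    fix xs ys :: "'b list" assume "length xs + length ys < n"
    then have "trunc n f (xs @ w # ys) = f (xs @ w # ys)" for w by (simp add: trunc_def)
    then show "klinear (\<lambda>w. f (xs @ w # ys))" using multilinearD[OF a, of xs ys] by simp
  qed
next
  assume a: "\<forall>xs ys. length xs + length ys < n \<longrightarrow> klinear (\<lambda>w. f (xs @ w # ys))"
  show "multilinear (trunc n f)" unfolding multilinear_def
  proof (intro allI)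
    fix xs ys :: "'b list"
    show "klinear (\<lambda>w. trunc n f (xs @ w # ys))"
    proof (cases "length xs + length ys < n")
      case True
      then show ?thesis using a by (simp add: trunc_def)
    next
      case False
      then show ?thesis by (simp add: trunc_def klinear_zero)
    qed
  qed
qed

lemma multilinear_trunc: "multilinear f \<Longrightarrow> multilinear (trunc n f)"
  by (simp add: multilinear_trunc_iff multilinearD)

lemma trunc_eq_of_length_le: "length xs \<le> n \<Longrightarrow> trunc n f xs = f xs" by (simp add: trunc_def)

end

section \<open>Multiplicative inverse\<close>

definition inv_series_step :: "('b::ring_1 list \<Rightarrow> 'b) \<Rightarrow> ('b list \<Rightarrow> 'b) \<Rightarrow> 'b list \<Rightarrow> 'b" where
  "inv_series_step h r xs = (if xs = [] then binv (h []) else - binv (h []) * (\<Sum>k = 1..length xs. h (take k xs) * r (drop k xs)))"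

definition inv_series :: "('b::ring_1 list \<Rightarrow> 'b) \<Rightarrow> 'b list \<Rightarrow> 'b" where
  "inv_series h = (SOME r. \<forall>xs. r xs = inv_series_step h r xs)"

lemma inv_series_rec: "inv_series h xs = inv_series_step h (inv_series h) xs"
proof -
  have "\<exists>r. \<forall>xs. r xs = inv_series_step h r xs"
  proof (rule length_recursion_exists)
    fix f g :: "'a list \<Rightarrow> 'a" and xs :: "'a list"
    assume a: "\<And>ys. length ys < length xs \<Longrightarrow> f ys = g ys"
    have "(\<Sum>k = 1..length xs. h (take k xs) * f (drop k xs)) = (\<Sum>k = 1..length xs. h (take k xs) * g (drop k xs))"
      by (rule sum.cong) (auto simp: a)
    then show "inv_series_step h f xs = inv_series_step h g xs"
      unfolding inv_series_step_def by simp
  qed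
  then have "\<forall>xs. inv_series h xs = inv_series_step h (inv_series h) xs" unfolding inv_series_def by (rule someI_ex)
  then show ?thesis by blast
qed

lemma inv_series_Nil: "inv_series h [] = binv (h [])"
  by (subst inv_series_rec) (simp add: inv_series_step_def)

lemma mprod_inv_series: assumes "bunit (h [])" shows "mprod h (inv_series h) = mone"
proof
  fix xs show "mprod h (inv_series h) xs = mone xs"
  proof (cases "xs = []")
    case True then show ?thesis using binv_inverse[OF assms] by (simp add: inv_series_Nil)
  next
    case False
    have "mprod h (inv_series h) xs = h [] * inv_series h xs + (\<Sum>k = 1..length xs. h (take k xs) * inv_series h (drop k xs))"
      unfolding mprod_def by (simp add: sum.atLeast_Suc_atMost)
    also have "\<dots> = 0"
      apply (subst inv_series_rec) using False binv_inverse[OF assms] by (simp add: inv_series_step_def flip: mult.assoc)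
    finally show ?thesis using False by (cases xs) auto
  qed
qed

lemma mprod_inv_series_left: assumes "bunit (h [])" shows "mprod (inv_series h) h = mone"
proof -
  have u: "bunit (inv_series h [])" using assms by (simp add: inv_series_Nil bunit_binv)
  have "h = mprod h (mprod (inv_series h) (inv_series (inv_series h)))" using mprod_inv_series[of "inv_series h", OF u] by simp
  also have "\<dots> = inv_series (inv_series h)" by (simp add: mprod_inv_series[of h, OF assms] flip: mprod_assoc)
  finally have "h = inv_series (inv_series h)" .
  then show ?thesis using mprod_inv_series[of "inv_series h", OF u] by simp
qed

lemma inv_series_local:
  assumes "\<And>ys. length ys \<le> n \<Longrightarrow> h1 ys = h2 ys" "length xs \<le> n"
  shows "inv_series h1 xs = inv_series h2 xs"
  using assms(2)
proof (induction "length xs" arbitrary: xs rule: less_induct)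
  case less
  have s: "(\<Sum>k = 1..length xs. h1 (take k xs) * inv_series h1 (drop k xs)) = (\<Sum>k = 1..length xs. h2 (take k xs) * inv_series h2 (drop k xs))"
  proof (rule sum.cong)
    fix k assume k: "k \<in> {1..length xs}"
    have "length (drop k xs) < length xs" using k by auto
    then have "inv_series h1 (drop k xs) = inv_series h2 (drop k xs)"
      using less(1)[of "drop k xs"] less(2) by simp
    moreover have "h1 (take k xs) = h2 (take k xs)" using assms(1)[of "take k xs"] less(2) by simp
    ultimately show "h1 (take k xs) * inv_series h1 (drop k xs) = h2 (take k xs) * inv_series h2 (drop k xs)"
      by simp
  qed simp
  have "h1 [] = h2 []" using assms(1) by simp
  then show ?case
    by (subst (1 2) inv_series_rec) (simp only: inv_series_step_def s)
qed

context scalars begin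

lemma multilinear_inv_series: assumes h: "multilinear h" shows "multilinear (inv_series h)"
proof -
  have "\<forall>xs ys. length xs + length ys = n \<longrightarrow> klinear (\<lambda>w. inv_series h (xs @ w # ys))" for n
  proof (induction n rule: less_induct)
    case (less n)
    show ?case
    proof (intro allI impI)
      fix xs ys :: "'b list" assume len: "length xs + length ys = n"
      have "klinear (\<lambda>w. - binv (h []) * (\<Sum>k = 1..length xs + Suc (length ys). h (take k (xs @ w # ys)) * inv_series h (drop k (xs @ w # ys))))"
      proof (intro klinear_mult_left klinear_sum)
        fix k assume k: "k \<in> {1..length xs + Suc (length ys)}"
        show "klinear (\<lambda>w. h (take k (xs @ w # ys)) * inv_series h (drop k (xs @ w # ys)))"
        proof (cases "k \<le> length xs")
          case True
          have "klinear (\<lambda>w. inv_series h (drop k xs @ w # ys))"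
            using less.IH[of "length (drop k xs) + length ys"] k True len by auto
          then show ?thesis using True by (simp add: take_append_Cons drop_append_Cons klinear_mult_left)
        next
          case False
          then have "take k (xs @ w # ys) = xs @ w # take (k - length xs - 1) ys"
            "drop k (xs @ w # ys) = drop (k - length xs - 1) ys" for w
            by (simp_all only: take_append_Cons drop_append_Cons if_False)
          then show ?thesis by (simp add: klinear_mult_right multilinearD[OF h])
        qed
      qed
      then show "klinear (\<lambda>w. inv_series h (xs @ w # ys))"
        by (subst inv_series_rec) (simp add: inv_series_step_def)
    qed
  qed
  then show ?thesis by (auto simp: multilinear_def)
qed

lemma minv_eq_inv_series: assumes "multilinear h" "bunit (h [])" shows "minv sB h = inv_series h"
  unfolding minv_def
proof (rule the_equality)
  show "mlin sB (inv_series h) \<and> mprod h (inv_series h) = mone \<and> mprod (inv_series h) h = mone"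
    using assms by (simp add: mlin_iff_multilinear multilinear_inv_series mprod_inv_series mprod_inv_series_left)
  fix g assume "mlin sB g \<and> mprod h g = mone \<and> mprod g h = mone"
  then show "g = inv_series h" using mprod_inverse_unique[of h "inv_series h" g] mprod_inv_series[of h, OF assms(2)]
    by auto
qed

end

section \<open>Block decompositions\<close>

definition blocks :: "'x list \<Rightarrow> 'x list list set" where
  "blocks xs = {bs. concat bs = xs \<and> [] \<notin> set bs}"

lemma blocks_Nil[simp]: "blocks [] = {[]}"
proof -
  have "x = []" if "concat x = []" "[] \<notin> set x" for x :: "'a list list"
    using that by (cases x) auto
  then show ?thesis by (auto simp: blocks_def)
qed

lemma sum_eq_single: "finite A \<Longrightarrow> a \<in> A \<Longrightarrow> (\<And>k. k \<in> A \<Longrightarrow> k \<noteq> a \<Longrightarrow> F k = 0) \<Longrightarrow> sum F A = F a"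
  by (simp add: sum.remove sum.neutral)

lemma blocks_Cons: "blocks (x#xs) = (\<Union>k\<in>{0..length xs}. (\<lambda>bs. (x # take k xs) # bs) ` blocks (drop k xs))"
proof (intro equalityI subsetI)
  fix bs assume "bs \<in> blocks (x#xs)"
  then have c: "concat bs = x#xs" and ne: "[] \<notin> set bs" by (auto simp: blocks_def)
  then obtain b bs' where bs: "bs = b # bs'" by (cases bs) auto
  with ne obtain y p where b: "b = y # p" by (cases b) auto
  from c bs b have y: "y = x" and pc: "p @ concat bs' = xs" by auto
  then have "p = take (length p) xs" "concat bs' = drop (length p) xs" by auto
  moreover have "length p \<le> length xs" using pc by auto
  ultimately show "bs \<in> (\<Union>k\<in>{0..length xs}. (\<lambda>bs. (x # take k xs) # bs) ` blocks (drop k xs))"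
    using bs b y ne by (auto simp: blocks_def intro!: bexI[of _ "length p"])
next
  fix bs assume "bs \<in> (\<Union>k\<in>{0..length xs}. (\<lambda>bs. (x # take k xs) # bs) ` blocks (drop k xs))"
  then show "bs \<in> blocks (x#xs)" by (auto simp: blocks_def)
qed

lemma finite_blocks: "finite (blocks xs)"
proof (induction "length xs" arbitrary: xs rule: less_induct)
  case less
  show ?case
  proof (cases xs)
    case Nil then show ?thesis by simp
  next
    case (Cons y ys)
    have "finite (blocks (drop k ys))" for k using less Cons by auto
    then show ?thesis using Cons by (simp add: blocks_Cons)
  qed
qed

lemma sum_blocks_Cons:
  "sum F (blocks (x#xs)) = (\<Sum>k=0..length xs. \<Sum>bs\<in>blocks (drop k xs). F ((x # take k xs) # bs))"
proof -
  have "sum F (blocks (x#xs)) = (\<Sum>k=0..length xs. sum F ((\<lambda>bs. (x # take k xs) # bs) ` blocks (drop k xs)))"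
    unfolding blocks_Cons
  proof (rule sum.UNION_disjoint)
    show "finite {0..length xs}" by simp
    show "\<forall>i\<in>{0..length xs}. finite ((\<lambda>bs. (x # take i xs) # bs) ` blocks (drop i xs))"
      by (simp add: finite_blocks)
    show "\<forall>i\<in>{0..length xs}. \<forall>j\<in>{0..length xs}. i \<noteq> j \<longrightarrow>
      (\<lambda>bs. (x # take i xs) # bs) ` blocks (drop i xs) \<inter> (\<lambda>bs. (x # take j xs) # bs) ` blocks (drop j xs) = {}"
    proof (intro ballI impI)
      fix i j assume "i \<in> {0..length xs}" "j \<in> {0..length xs}" "i \<noteq> j"
      then have "take i xs \<noteq> take j xs" by (metis atLeastAtMost_iff length_take min.absorb2)
      then show "(\<lambda>bs. (x # take i xs) # bs) ` blocks (drop i xs) \<inter> (\<lambda>bs. (x # take j xs) # bs) ` blocks (drop j xs) = {}"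
        by auto
    qed
  qed
  also have "\<dots> = (\<Sum>k=0..length xs. \<Sum>bs\<in>blocks (drop k xs). F ((x # take k xs) # bs))"
    by (rule sum.cong) (simp_all add: sum.reindex)
  finally show ?thesis .
qed

lemma sum_blocks_map:
  "sum F (blocks (map h xs)) = sum (\<lambda>bss. F (map (map h) bss)) (blocks xs)"
proof (induction "length xs" arbitrary: xs F rule: less_induct)
  case less
  show ?case
  proof (cases xs)
    case Nil then show ?thesis by simp
  next
    case (Cons y ys)
    have "sum F (blocks (map h xs)) = (\<Sum>k=0..length ys. \<Sum>bs\<in>blocks (map h (drop k ys)). F ((h y # map h (take k ys)) # bs))"
      using Cons by (simp add: sum_blocks_Cons take_map drop_map)
    also have "\<dots> = (\<Sum>k=0..length ys. \<Sum>bs\<in>blocks (drop k ys). F ((h y # map h (take k ys)) # map (map h) bs))"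
      by (rule sum.cong) (use less Cons in auto)
    also have "\<dots> = sum (\<lambda>bss. F (map (map h) bss)) (blocks xs)"
      using Cons by (simp add: sum_blocks_Cons)
    finally show ?thesis .
  qed
qed

lemma length_le_of_mem_blocks: "bs \<in> blocks xs \<Longrightarrow> b \<in> set bs \<Longrightarrow> length b \<le> length xs"
proof -
  have "length b \<le> length (concat bs)" if "b \<in> set bs" for bs :: "'a list list"
    using that by (induction bs) auto
  then show "bs \<in> blocks xs \<Longrightarrow> b \<in> set bs \<Longrightarrow> length b \<le> length xs" by (auto simp: blocks_def)
qed

lemma length_le_of_blocks: "bs \<in> blocks xs \<Longrightarrow> length bs \<le> length xs"
proof -
  assume a: "bs \<in> blocks xs"
  have "length bs \<le> length (concat bs)" if "[] \<notin> set bs" for bs :: "'a list list"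
    using that
  proof (induction bs)
    case (Cons a bs)
    then have "1 \<le> length a" by (cases a) auto
    then show ?case using Cons by simp
  qed simp
  then show ?thesis using a by (auto simp: blocks_def)
qed

lemma concat_map_concat: "concat (map concat xss) = concat (concat xss)"
  by (induction xss) auto

lemma mem_listset: "cs \<in> listset As \<longleftrightarrow> list_all2 (\<in>) cs As"
proof (induction As arbitrary: cs)
  case Nil then show ?case by auto
next
  case (Cons A As)
  show ?case
  proof (cases cs)
    case Nil then show ?thesis by (simp add: set_Cons_def)
  next
    case (Cons c cs')
    then show ?thesis by (simp add: set_Cons_def Cons.IH)
  qed
qed

lemma listset_Cons_img: "listset (A # As) = (\<lambda>(a, cs). a # cs) ` (A \<times> listset As)"
proof (intro equalityI subsetI)
  fix x assume "x \<in> listset (A # As)"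
  then obtain a cs where "x = a # cs" "a \<in> A" "cs \<in> listset As" by (auto simp: set_Cons_def)
  then show "x \<in> (\<lambda>(a, cs). a # cs) ` (A \<times> listset As)" by force
next
  fix x assume "x \<in> (\<lambda>(a, cs). a # cs) ` (A \<times> listset As)"
  then obtain a cs where "x = a # cs" "a \<in> A" "cs \<in> listset As" by auto
  then show "x \<in> listset (A # As)" by (simp add: set_Cons_def)
qed

lemma finite_listset: "(\<And>A. A \<in> set As \<Longrightarrow> finite A) \<Longrightarrow> finite (listset As)"
proof (induction As)
  case Nil then show ?case by simp
next
  case (Cons A As)
  then have "finite (A \<times> listset As)" by simp
  then show ?case by (simp only: listset_Cons_img) (rule finite_imageI)
qed

lemma sum_listset_Cons:
  assumes "finite A" "finite (listset As)"
  shows "sum F (listset (A # As)) = (\<Sum>a\<in>A. \<Sum>cs\<in>listset As. F (a # cs))"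
proof -
  have "inj_on (\<lambda>(a, cs). a # cs) (A \<times> listset As)" by (auto simp: inj_on_def)
  then have "sum F (listset (A # As)) = (\<Sum>p\<in>A \<times> listset As. F (fst p # snd p))"
    unfolding listset_Cons_img by (subst sum.reindex) (simp_all add: case_prod_beta o_def)
  also have "\<dots> = (\<Sum>a\<in>A. \<Sum>cs\<in>listset As. F (a # cs))"
    using assms by (simp add: sum.cartesian_product case_prod_beta)
  finally show ?thesis .
qed

lemma map_concat_mem_blocks:
  assumes cs: "cs \<in> blocks xs" and css: "css \<in> blocks cs"
  shows "map concat css \<in> blocks xs" and "css \<in> listset (map blocks (map concat css))"
proof -
  from cs css have a: "concat cs = xs" "[] \<notin> set cs" "concat css = cs" "[] \<notin> set css"
    by (simp_all add: blocks_def)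
  have ne: "concat c \<noteq> []" if "c \<in> set css" for c
  proof -
    have "c \<noteq> []" using that a by auto
    then obtain y ys where "c = y # ys" by (cases c) auto
    moreover have "y \<in> set cs" using that a \<open>c = y # ys\<close> by (auto intro!: bexI[of _ c])
    ultimately show ?thesis using a by auto
  qed
  then have "[] \<notin> set (map concat css)" unfolding set_map by (metis imageE)
  moreover have "concat (map concat css) = xs" using a by (simp add: concat_map_concat)
  ultimately show "map concat css \<in> blocks xs" by (simp add: blocks_def)
  have "list_all2 (\<in>) css (map blocks (map concat css))"
  proof (rule list_all2_all_nthI)
    fix i assume "i < length css"
    then have "css ! i \<in> set css" by simp
    then have "[] \<notin> set (css ! i)" using a by auto
    then show "css ! i \<in> map blocks (map concat css) ! i" using \<open>i < length css\<close> by (simp add: blocks_def)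
  qed simp
  then show "css \<in> listset (map blocks (map concat css))" by (simp add: mem_listset)
qed

lemma concat_mem_blocks:
  assumes ds: "ds \<in> blocks xs" and css: "css \<in> listset (map blocks ds)"
  shows "map concat css = ds" and "concat css \<in> blocks xs" and "css \<in> blocks (concat css)"
proof -
  from ds have d: "concat ds = xs" "[] \<notin> set ds" by (simp_all add: blocks_def)
  from css have "list_all2 (\<in>) css (map blocks ds)" by (simp add: mem_listset)
  then have len: "length css = length ds" and nth: "\<And>i. i < length ds \<Longrightarrow> concat (css ! i) = ds ! i \<and> [] \<notin> set (css ! i)"
    by (auto simp: list_all2_conv_all_nth blocks_def)
  show mc: "map concat css = ds" using len nth by (intro nth_equalityI) auto
  have "[] \<notin> set (concat css)"
  proof
    assume "[] \<in> set (concat css)"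
    then obtain c where "c \<in> set css" "[] \<in> set c" by auto
    then obtain i where "i < length css" "css ! i = c" by (auto simp: in_set_conv_nth)
    then show False using nth len \<open>[] \<in> set c\<close> by auto
  qed
  moreover have "concat (concat css) = xs" using d mc by (simp flip: concat_map_concat)
  ultimately show "concat css \<in> blocks xs" by (simp add: blocks_def)
  have "[] \<notin> set css"
  proof
    assume "[] \<in> set css"
    then obtain i where "i < length css" "css ! i = []" by (auto simp: in_set_conv_nth)
    then have "ds ! i = []" using nth len by fastforce
    then show False using d \<open>i < length css\<close> len by (metis nth_mem)
  qed
  then show "css \<in> blocks (concat css)" by (simp add: blocks_def)
qed

text \<open>Refining a block decomposition of a block decomposition is the same as choosing a block
  decomposition of each block.\<close>

lemma sum_blocks_of_blocks:
  "(\<Sum>cs\<in>blocks xs. \<Sum>css\<in>blocks cs. F css) = (\<Sum>ds\<in>blocks xs. \<Sum>css\<in>listset (map blocks ds). F css)"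
proof -
  define S1 where "S1 = Sigma (blocks xs) blocks"
  define S2 where "S2 = Sigma (blocks xs) (\<lambda>ds. listset (map blocks ds))"
  have "(\<Sum>cs\<in>blocks xs. \<Sum>css\<in>blocks cs. F css) = (\<Sum>p\<in>S1. F (snd p))"
    unfolding S1_def by (subst sum.Sigma) (simp_all add: finite_blocks case_prod_beta)
  also have "\<dots> = (\<Sum>p\<in>S2. F (snd p))"
  proof (rule sum.reindex_bij_witness[where j="\<lambda>(cs, css). (map concat css, css)" and i="\<lambda>(ds, css). (concat css, css)"])
    fix p assume "p \<in> S1"
    then obtain cs css where p: "p = (cs, css)" "cs \<in> blocks xs" "css \<in> blocks cs" by (auto simp: S1_def)
    then have "concat css = cs" by (simp add: blocks_def)
    then show "(case case p of (cs, css) \<Rightarrow> (map concat css, css) of (ds, css) \<Rightarrow> (concat css, css)) = p"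
      using p by simp
    show "(case p of (cs, css) \<Rightarrow> (map concat css, css)) \<in> S2"
      using map_concat_mem_blocks[OF p(2,3)] p by (simp add: S2_def)
  next
    fix p assume "p \<in> S2"
    then obtain ds css where p: "p = (ds, css)" "ds \<in> blocks xs" "css \<in> listset (map blocks ds)" by (auto simp: S2_def)
    show "(case case p of (ds, css) \<Rightarrow> (concat css, css) of (cs, css) \<Rightarrow> (map concat css, css)) = p"
      using concat_mem_blocks(1)[OF p(2,3)] p by simp
    show "(case p of (ds, css) \<Rightarrow> (concat css, css)) \<in> S1"
      using concat_mem_blocks(2,3)[OF p(2,3)] p by (simp add: S1_def)
  qed (auto simp: S1_def)
  also have "\<dots> = (\<Sum>ds\<in>blocks xs. \<Sum>css\<in>listset (map blocks ds). F css)"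
    unfolding S2_def
    by (subst sum.Sigma) (auto simp: finite_blocks case_prod_beta intro!: finite_listset)
  finally show ?thesis .
qed

lemma sum_triangle_swap:
  fixes n :: nat
  shows "(\<Sum>j=0..n. \<Sum>k=0..j. T k j) = (\<Sum>k=0..n. \<Sum>i=0..n-k. T k (k+i))"
proof -
  have "(\<Sum>j=0..n. \<Sum>k=0..j. T k j) = (\<Sum>k=0..n. \<Sum>j=k..n. T k j)"
  proof (induction n)
    case 0 then show ?case by simp
  next
    case (Suc n)
    have "(\<Sum>k=0..Suc n. \<Sum>j=k..Suc n. T k j) = (\<Sum>k=0..n. \<Sum>j=k..Suc n. T k j) + T (Suc n) (Suc n)"
      by simp
    also have "\<dots> = (\<Sum>k=0..n. (\<Sum>j=k..n. T k j) + T k (Suc n)) + T (Suc n) (Suc n)"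
      by (intro arg_cong2[where f="(+)"] sum.cong refl) simp
    also have "\<dots> = (\<Sum>j=0..Suc n. \<Sum>k=0..j. T k j)"
      using Suc by (simp add: sum.distrib add.assoc)
    finally show ?case by simp
  qed
  also have "\<dots> = (\<Sum>k=0..n. \<Sum>i=0..n-k. T k (k+i))"
  proof (rule sum.cong)
    fix k assume "k \<in> {0..n}"
    then have "(\<Sum>j=k..n. T k j) = (\<Sum>j=0+k..(n-k)+k. T k j)" by simp
    also have "\<dots> = (\<Sum>i=0..n-k. T k (i+k))" by (rule sum.shift_bounds_cl_nat_ivl)
    finally show "(\<Sum>j=k..n. T k j) = (\<Sum>i=0..n-k. T k (k+i))" by (simp add: add.commute)
  qed simp
  finally show ?thesis .
qed

section \<open>Composition\<close>

lemma mcomp_blocks: "mcomp f g xs = sum (\<lambda>bs. f (map g bs)) (blocks xs)"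
  by (simp add: mcomp_def blocks_def)

lemma mcomp_Nil[simp]: "mcomp f g [] = f []"
  by (simp add: mcomp_blocks)

lemma mcomp_Cons: "mcomp f g (x#xs) = (\<Sum>k=0..length xs. mcomp (\<lambda>ys. f (g (x # take k xs) # ys)) g (drop k xs))"
  by (simp add: mcomp_blocks sum_blocks_Cons)

lemma mcomp_add_left: "mcomp (\<lambda>ys. f ys + h ys) g xs = mcomp f g xs + mcomp h g xs"
  by (simp add: mcomp_blocks sum.distrib)

lemma mcomp_cmult_left: "mcomp (\<lambda>ys. c * f ys) g xs = c * mcomp f g xs"
  by (simp add: mcomp_blocks sum_distrib_left)

lemma mcomp_zero_left[simp]: "mcomp (\<lambda>_. 0) g = (\<lambda>_. 0)"
  by (simp add: mcomp_blocks fun_eq_iff)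

lemma mcomp_local:
  assumes "\<And>ys. length ys \<le> n \<Longrightarrow> f1 ys = f2 ys" "\<And>ys. length ys \<le> n \<Longrightarrow> g1 ys = g2 ys" "length xs \<le> n"
  shows "mcomp f1 g1 xs = mcomp f2 g2 xs"
  unfolding mcomp_blocks
proof (rule sum.cong)
  fix bs assume bs: "bs \<in> blocks xs"
  have "\<And>b. b \<in> set bs \<Longrightarrow> g1 b = g2 b" using length_le_of_mem_blocks[OF bs] assms(2,3) by (meson le_trans)
  then have "map g1 bs = map g2 bs" by (rule map_cong[OF refl])
  moreover have "length (map g2 bs) \<le> n" using length_le_of_blocks[OF bs] assms(3) by simp
  ultimately show "f1 (map g1 bs) = f2 (map g2 bs)" using assms(1)[of "map g2 bs"] by (simp only:)
qed simp

lemma mcomp_mone_left: "mcomp mone g = mone"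
proof
  fix xs show "mcomp mone g xs = mone xs"
    by (cases xs) (simp_all add: mcomp_Cons)
qed

lemma mcomp_mI_left: assumes "g [] = 0" shows "mcomp mI g = g"
proof
  fix xs show "mcomp mI g xs = g xs"
  proof (cases xs)
    case Nil then show ?thesis using assms by simp
  next
    case (Cons x xs')
    have e: "(\<lambda>ys. mI (v # ys)) = (\<lambda>ys. v * mone ys)" for v :: 'a
      by (auto simp: fun_eq_iff mI_def split: list.split)
    have "mcomp mI g xs = (\<Sum>k=0..length xs'. g (x # take k xs') * mone (drop k xs'))"
      using Cons by (simp add: mcomp_Cons e mcomp_cmult_left mcomp_mone_left)
    also have "\<dots> = g (x # take (length xs') xs') * mone (drop (length xs') xs')"
      by (rule sum_eq_single) (auto simp: mone_def)
    finally show ?thesis using Cons by simp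
  qed
qed

context scalars begin

lemma multilinear_zero_arg: "multilinear f \<Longrightarrow> f (xs @ 0 # ys) = 0"
  using klinear_map_zero[OF multilinearD] by blast

lemma mcomp_mI_right: assumes "multilinear f" shows "mcomp f mI = f"
proof
  fix xs show "mcomp f mI xs = f xs"
    using assms
  proof (induction xs arbitrary: f)
    case Nil then show ?case by simp
  next
    case (Cons x xs)
    have "mcomp f mI (x#xs) = (\<Sum>k=0..length xs. mcomp (\<lambda>ys. f (mI (x # take k xs) # ys)) mI (drop k xs))"
      by (simp add: mcomp_Cons)
    also have "\<dots> = mcomp (\<lambda>ys. f (mI (x # take 0 xs) # ys)) mI (drop 0 xs)"
    proof (rule sum_eq_single)
      fix i assume "i \<in> {0..length xs}" "i \<noteq> 0"
      show "mcomp (\<lambda>ys. f (mI (x # take i xs) # ys)) mI (drop i xs) = 0"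
      proof -
        have "mI (x # take i xs) = 0" using \<open>i \<in> {0..length xs}\<close> \<open>i \<noteq> 0\<close> by (cases xs; cases i) auto
        moreover have "f (0 # ys) = 0" for ys using multilinear_zero_arg[OF Cons.prems, of "[]"] by simp
        ultimately show ?thesis by simp
      qed
    qed auto
    also have "\<dots> = f (x # xs)" using Cons.IH[OF multilinear_Cons[OF Cons.prems]] by simp
    finally show ?case .
  qed
qed

lemma mcomp_klinear_left: "mcomp (\<lambda>zs. sB c (A zs) + B zs) g xs = sB c (mcomp A g xs) + mcomp B g xs"
  by (simp add: mcomp_blocks sum.distrib sB_sum)

lemma klinear_mcomp_first_block:
  assumes f: "multilinear f" and T: "klinear T"
  shows "klinear (\<lambda>w. mcomp (\<lambda>zs. f (T w # zs)) g ys)"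
  unfolding klinear_def
proof (intro allI)
  fix c u v
  have "f (T (sB c u + v) # zs) = sB c (f (T u # zs)) + f (T v # zs)" for zs
    using klinearD[OF T] klinearD[OF multilinearD[OF f, of "[]" zs]] by simp
  then show "mcomp (\<lambda>zs. f (T (sB c u + v) # zs)) g ys =
    sB c (mcomp (\<lambda>zs. f (T u # zs)) g ys) + mcomp (\<lambda>zs. f (T v # zs)) g ys"
    by (simp add: mcomp_klinear_left)
qed

lemma multilinear_mcomp: assumes f: "multilinear f" and g: "multilinear g" shows "multilinear (mcomp f g)"
proof -
  have "\<forall>f xs ys. multilinear f \<longrightarrow> length xs = n \<longrightarrow> klinear (\<lambda>w. mcomp f g (xs @ w # ys))" for n
  proof (induction n rule: less_induct)
    case (less n)
    show ?case
    proof (intro allI impI)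
      fix f and xs ys :: "'b list" assume f: "multilinear f" and n: "length xs = n"
      show "klinear (\<lambda>w. mcomp f g (xs @ w # ys))"
      proof (cases xs)
        case Nil
        have "klinear (\<lambda>w. mcomp (\<lambda>zs. f (g (w # take k ys) # zs)) g (drop k ys))" for k
          using klinear_mcomp_first_block[OF f multilinearD[OF g, of "[]" "take k ys"]] by simp
        then have "klinear (\<lambda>w. \<Sum>k=0..length ys. mcomp (\<lambda>zs. f (g (w # take k ys) # zs)) g (drop k ys))"
          by (rule klinear_sum)
        then show ?thesis using Nil by (simp add: mcomp_Cons)
      next
        case (Cons x xs')
        have "klinear (\<lambda>w. mcomp (\<lambda>zs. f (g (x # take k (xs' @ w # ys)) # zs)) g (drop k (xs' @ w # ys)))" for k
        proof (cases "k \<le> length xs'")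
          case True
          then have "take k (xs' @ w # ys) = take k xs'" "drop k (xs' @ w # ys) = drop k xs' @ w # ys" for w
            by (simp_all only: take_append_Cons drop_append_Cons if_True)
          moreover have "klinear (\<lambda>w. mcomp (\<lambda>zs. f (g (x # take k xs') # zs)) g (drop k xs' @ w # ys))"
            using less.IH[of "length (drop k xs')"] Cons n multilinear_Cons[OF f] by auto
          ultimately show ?thesis by simp
        next
          case False
          then have "take k (xs' @ w # ys) = xs' @ w # take (k - length xs' - 1) ys"
            "drop k (xs' @ w # ys) = drop (k - length xs' - 1) ys" for w
            by (simp_all only: take_append_Cons drop_append_Cons if_False)
          moreover have "klinear (\<lambda>w. mcomp (\<lambda>zs. f (g (x # xs' @ w # take (k - length xs' - 1) ys) # zs))
              g (drop (k - length xs' - 1) ys))"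
            using klinear_mcomp_first_block[OF f multilinearD[OF g, of "x # xs'"]] by simp
          ultimately show ?thesis by simp
        qed
        then have "klinear (\<lambda>w. \<Sum>k=0..length xs' + Suc (length ys).
            mcomp (\<lambda>zs. f (g (x # take k (xs' @ w # ys)) # zs)) g (drop k (xs' @ w # ys)))"
          by (rule klinear_sum)
        then show ?thesis using Cons by (simp add: mcomp_Cons)
      qed
    qed
  qed
  then show ?thesis using f by (auto simp: multilinear_def)
qed

end

lemma mprod_mcomp_Cons:
  "mprod (\<lambda>ys. mcomp f g (x # ys)) H xs
     = (\<Sum>k=0..length xs. mprod (mcomp (\<lambda>zs. f (g (x # take k xs) # zs)) g) H (drop k xs))"
proof -
  define F where "F k = (\<lambda>zs. f (g (x # take k xs) # zs))" for k
  have "mprod (\<lambda>ys. mcomp f g (x # ys)) H xs = (\<Sum>j=0..length xs. mcomp f g (x # take j xs) * H (drop j xs))"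
    by (simp add: mprod_def)
  also have "\<dots> = (\<Sum>j=0..length xs. \<Sum>k=0..j. mcomp (F k) g (drop k (take j xs)) * H (drop j xs))"
  proof (rule sum.cong)
    fix j assume "j \<in> {0..length xs}"
    then have "mcomp f g (x # take j xs) = (\<Sum>k=0..j. mcomp (F k) g (drop k (take j xs)))"
      by (simp add: mcomp_Cons F_def min_def)
    then show "mcomp f g (x # take j xs) * H (drop j xs) = (\<Sum>k=0..j. mcomp (F k) g (drop k (take j xs)) * H (drop j xs))"
      by (simp add: sum_distrib_right)
  qed simp
  also have "\<dots> = (\<Sum>k=0..length xs. \<Sum>i=0..length xs-k. mcomp (F k) g (drop k (take (k+i) xs)) * H (drop (k+i) xs))"
    by (rule sum_triangle_swap)
  also have "\<dots> = (\<Sum>k=0..length xs. mprod (mcomp (F k) g) H (drop k xs))"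
    by (simp add: mprod_def drop_take add.commute)
  finally show ?thesis by (simp add: F_def)
qed

lemma mcomp_mprod: "mcomp (mprod f h) g = mprod (mcomp f g) (mcomp h g)"
proof
  fix xs show "mcomp (mprod f h) g xs = mprod (mcomp f g) (mcomp h g) xs"
  proof (induction "length xs" arbitrary: xs f rule: less_induct)
    case less
    show ?case
    proof (cases xs)
      case Nil then show ?thesis by simp
    next
      case (Cons x xs')
      define F where "F k = (\<lambda>zs. f (g (x # take k xs') # zs))" for k
      have "mcomp (mprod f h) g xs = (\<Sum>k=0..length xs'. mcomp (\<lambda>ys. mprod f h (g (x # take k xs') # ys)) g (drop k xs'))"
        using Cons by (simp add: mcomp_Cons)
      also have "\<dots> = (\<Sum>k=0..length xs'. f [] * mcomp (\<lambda>ys. h (g (x # take k xs') # ys)) g (drop k xs')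
          + mcomp (mprod (F k) h) g (drop k xs'))"
        by (simp add: mprod_Cons mcomp_add_left mcomp_cmult_left F_def)
      also have "\<dots> = f [] * mcomp h g xs + (\<Sum>k=0..length xs'. mprod (mcomp (F k) g) (mcomp h g) (drop k xs'))"
        using less Cons by (simp add: sum.distrib sum_distrib_left mcomp_Cons)
      also have "\<dots> = f [] * mcomp h g xs + mprod (\<lambda>ys. mcomp f g (x # ys)) (mcomp h g) xs'"
        by (simp add: mprod_mcomp_Cons F_def)
      also have "\<dots> = mprod (mcomp f g) (mcomp h g) xs"
        using Cons by (simp add: mprod_Cons)
      finally show ?thesis .
    qed
  qed
qed

context scalars begin

lemma klinear_map_sum: "klinear T \<Longrightarrow> T (sum \<phi> A) = (\<Sum>a\<in>A. T (\<phi> a))"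
  by (induction A rule: infinite_finite_induct) (simp_all add: klinear_map_zero klinear_map_add)

lemma multilinear_expand_sums:
  assumes f: "multilinear f" and fin: "\<And>d. d \<in> set ds \<Longrightarrow> finite (A d)"
  shows "f (xs @ map (\<lambda>d. sum \<phi> (A d)) ds) = sum (\<lambda>cs. f (xs @ map \<phi> cs)) (listset (map A ds))"
  using fin
proof (induction ds arbitrary: xs)
  case Nil then show ?case by simp
next
  case (Cons d ds)
  have fl: "finite (listset (map A ds))" using Cons.prems by (intro finite_listset) auto
  have "f (xs @ map (\<lambda>d. sum \<phi> (A d)) (d # ds)) = (\<Sum>a\<in>A d. f (xs @ \<phi> a # map (\<lambda>d. sum \<phi> (A d)) ds))"
    using klinear_map_sum[OF multilinearD[OF f, of xs "map (\<lambda>d. sum \<phi> (A d)) ds"], of \<phi> "A d"] by simp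
  also have "\<dots> = (\<Sum>a\<in>A d. \<Sum>cs\<in>listset (map A ds). f (xs @ \<phi> a # map \<phi> cs))"
    using Cons.IH[of "xs @ [\<phi> _]"] Cons.prems by simp
  also have "\<dots> = sum (\<lambda>cs. f (xs @ map \<phi> cs)) (listset (A d # map A ds))"
    using Cons.prems fl by (subst sum_listset_Cons) auto
  also have "\<dots> = sum (\<lambda>cs. f (xs @ map \<phi> cs)) (listset (map A (d # ds)))" by simp
  finally show ?case .
qed

lemma mcomp_assoc: assumes f: "multilinear f" shows "mcomp (mcomp f g) h = mcomp f (mcomp g h)"
proof
  fix xs :: "'b list"
  define \<phi> where "\<phi> c = g (map h c)" for c
  have "mcomp (mcomp f g) h xs = (\<Sum>cs\<in>blocks xs. \<Sum>css\<in>blocks cs. f (map \<phi> css))"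
    unfolding mcomp_blocks[of "mcomp f g"] mcomp_blocks[of f g] sum_blocks_map
    by (simp add: \<phi>_def[abs_def] o_def)
  also have "\<dots> = (\<Sum>ds\<in>blocks xs. \<Sum>css\<in>listset (map blocks ds). f (map \<phi> css))"
    by (rule sum_blocks_of_blocks)
  also have "\<dots> = (\<Sum>ds\<in>blocks xs. f (map (\<lambda>d. sum \<phi> (blocks d)) ds))"
    by (rule sum.cong[OF refl]) (use multilinear_expand_sums[OF f, of _ blocks "[]" \<phi>] in \<open>simp add: finite_blocks\<close>)
  also have "\<dots> = mcomp f (mcomp g h) xs"
    unfolding mcomp_blocks[of f] mcomp_blocks[of g, abs_def] \<phi>_def ..
  finally show "mcomp (mcomp f g) h xs = mcomp f (mcomp g h) xs" .
qed

end

section \<open>Compositional inverse and S-transform\<close>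

text \<open>\<open>(I \<cdot> F) \<circ> (I \<cdot> S) = (I \<cdot> S) \<cdot> (F \<circ> (I \<cdot> S))\<close>, so \<open>I \<cdot> S\<close> inverts \<open>I \<cdot> F\<close> as soon as
  \<open>S = (F \<circ> (I \<cdot> S))\<^sup>-\<^sup>1\<close>; this equation determines \<open>S\<close> degree by degree.\<close>

definition strans_step :: "('b::ring_1 list \<Rightarrow> 'b) \<Rightarrow> ('b list \<Rightarrow> 'b) \<Rightarrow> 'b list \<Rightarrow> 'b" where
  "strans_step F S = inv_series (mcomp F (mprod mI S))"

definition strans :: "('b::ring_1 list \<Rightarrow> 'b) \<Rightarrow> 'b list \<Rightarrow> 'b" where
  "strans F = (SOME S. \<forall>xs. S xs = strans_step F S xs)"

lemma strans_step_local:
  assumes "\<And>ys. length ys < length xs \<Longrightarrow> S1 ys = S2 ys"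
  shows "strans_step F S1 xs = strans_step F S2 xs"
  unfolding strans_step_def
proof (rule inv_series_local[where n="length xs"])
  fix ys :: "'a list" assume ys: "length ys \<le> length xs"
  show "mcomp F (mprod mI S1) ys = mcomp F (mprod mI S2) ys"
  proof (rule mcomp_local[where n="length xs"])
    fix zs :: "'a list" assume "length zs \<le> length xs"
    then show "mprod mI S1 zs = mprod mI S2 zs"
      using assms by (cases zs) auto
  qed (use ys in auto)
qed simp

lemma strans_rec: "strans F = inv_series (mcomp F (mprod mI (strans F)))"
proof -
  have "\<exists>S. \<forall>xs. S xs = strans_step F S xs"
    by (rule length_recursion_exists) (rule strans_step_local)
  then have "\<forall>xs. strans F xs = strans_step F (strans F) xs" unfolding strans_def by (rule someI_ex)
  then show ?thesis by (simp add: fun_eq_iff strans_step_def)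
qed

definition comp_inv :: "('b::ring_1 list \<Rightarrow> 'b) \<Rightarrow> 'b list \<Rightarrow> 'b" where
  "comp_inv F = mprod mI (strans F)"

lemma strans_Nil: "strans F [] = binv (F [])"
  by (subst strans_rec) (simp add: inv_series_Nil)

lemma bunit_strans: "bunit (F []) \<Longrightarrow> bunit (strans F [])"
  by (simp add: strans_Nil bunit_binv)

lemma comp_inv_Nil[simp]: "comp_inv F [] = 0" by (simp add: comp_inv_def)

lemma mcomp_comp_inv: assumes "bunit (F [])" shows "mcomp (mprod mI F) (comp_inv F) = mI"
proof -
  let ?S = "strans F"
  let ?H = "mcomp F (comp_inv F)"
  have HN: "bunit (?H [])" using assms by simp
  have "mcomp (mprod mI F) (comp_inv F) = mprod (mcomp mI (comp_inv F)) ?H" by (rule mcomp_mprod)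
  also have "\<dots> = mprod (mprod mI ?S) ?H" by (simp add: mcomp_mI_left comp_inv_def)
  also have "\<dots> = mprod mI (mprod (inv_series ?H) ?H)"
    by (simp add: mprod_assoc comp_inv_def flip: strans_rec)
  also have "\<dots> = mI" using mprod_inv_series_left[of ?H, OF HN] by simp
  finally show ?thesis .
qed

context scalars begin

lemma multilinear_strans: assumes F: "multilinear F" shows "multilinear (strans F)"
proof -
  txt \<open>On lists of length at most \<open>n + 1\<close>, \<open>strans F\<close> is the inverse of a series built from
    \<open>F\<close> and the truncation of \<open>strans F\<close> to length \<open>n\<close> only.\<close>
  let ?S = "strans F"
  have "multilinear (trunc n ?S)" for n
  proof (induction n)
    case 0 then show ?case by (simp add: multilinear_trunc_iff)
  next
    case (Suc n)
    define H' where "H' = trunc (Suc n) (mcomp (trunc (Suc n) F) (trunc (Suc n) (mprod mI (trunc n ?S))))"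
    have linH': "multilinear H'" unfolding H'_def
      by (intro multilinear_trunc multilinear_mcomp multilinear_mprod multilinear_mI Suc F)
    have eq: "trunc (Suc n) ?S = trunc (Suc n) (inv_series H')"
    proof
      fix xs :: "'b list"
      show "trunc (Suc n) ?S xs = trunc (Suc n) (inv_series H') xs"
      proof (cases "length xs \<le> Suc n")
        case True
        have "?S xs = inv_series (mcomp F (mprod mI ?S)) xs" by (subst strans_rec) simp
        also have "\<dots> = inv_series H' xs"
        proof (rule inv_series_local[where n="Suc n"])
          fix ys :: "'b list" assume ys: "length ys \<le> Suc n"
          show "mcomp F (mprod mI ?S) ys = H' ys"
            unfolding H'_def trunc_eq_of_length_le[OF ys]
          proof (rule mcomp_local[where n="Suc n"])
            fix zs :: "'b list" assume zs: "length zs \<le> Suc n"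
            show "mprod mI ?S zs = trunc (Suc n) (mprod mI (trunc n ?S)) zs"
              using zs by (cases zs) (auto simp: trunc_def)
          qed (use ys in \<open>auto simp: trunc_def\<close>)
        qed (use True in simp)
        finally show ?thesis using True by (simp add: trunc_def)
      qed (simp add: trunc_def)
    qed
    show ?case unfolding eq by (intro multilinear_trunc multilinear_inv_series linH')
  qed
  then have "\<forall>xs ys. length xs + length ys < n \<longrightarrow> klinear (\<lambda>w. ?S (xs @ w # ys))" for n
    by (simp only: multilinear_trunc_iff)
  then show ?thesis unfolding multilinear_def
    by (meson lessI)
qed

lemma multilinear_comp_inv: "multilinear F \<Longrightarrow> multilinear (comp_inv F)"
  by (simp add: comp_inv_def multilinear_mprod multilinear_mI multilinear_strans)

lemma mcomp_comp_inv_left: assumes F: "multilinear F" and u: "bunit (F [])"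
  shows "mcomp (comp_inv F) (mprod mI F) = mI"
proof -
  let ?f = "mprod mI F" and ?g = "comp_inv F" and ?g' = "comp_inv (strans F)"
  have lin_f: "multilinear ?f" by (simp add: multilinear_mprod multilinear_mI F)
  have gg': "mcomp ?g ?g' = mI" unfolding comp_inv_def[of F] by (rule mcomp_comp_inv[of "strans F", OF bunit_strans[of F, OF u]])
  have "?f = mcomp ?f mI" by (simp add: mcomp_mI_right[OF lin_f])
  also have "\<dots> = mcomp ?f (mcomp ?g ?g')" by (simp add: gg')
  also have "\<dots> = mcomp (mcomp ?f ?g) ?g'" by (simp add: mcomp_assoc[OF lin_f])
  also have "\<dots> = ?g'" by (simp add: mcomp_comp_inv[of F, OF u] mcomp_mI_left)
  finally show ?thesis using gg' by simp
qed

lemma mcomp_left_inverse_unique: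
  assumes "multilinear g1" "mcomp g1 f = mI" "mcomp f g = mI" "g [] = 0"
  shows "g1 = g"
proof -
  have "g1 = mcomp g1 mI" by (simp add: mcomp_mI_right[OF assms(1)])
  also have "\<dots> = mcomp g1 (mcomp f g)" by (simp add: assms(3))
  also have "\<dots> = mcomp (mcomp g1 f) g" by (simp add: mcomp_assoc[OF assms(1)])
  also have "\<dots> = g" by (simp add: assms(2) mcomp_mI_left[of g, OF assms(4)])
  finally show ?thesis .
qed

lemma mcinv_eq_comp_inv: assumes F: "multilinear F" and u: "bunit (F [])"
  shows "mcinv sB (mprod mI F) = comp_inv F"
  unfolding mcinv_def
proof (rule the_equality)
  show "mlin sB (comp_inv F) \<and> comp_inv F [] = 0 \<and> mcomp (mprod mI F) (comp_inv F) = mI \<and> mcomp (comp_inv F) (mprod mI F) = mI"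
    using multilinear_comp_inv[OF F] mcomp_comp_inv[of F, OF u] mcomp_comp_inv_left[OF F u] by (simp add: mlin_iff_multilinear)
  fix g assume a: "mlin sB g \<and> g [] = 0 \<and> mcomp (mprod mI F) g = mI \<and> mcomp g (mprod mI F) = mI"
  show "g = comp_inv F"
  proof (rule mcomp_left_inverse_unique[of g "mprod mI F" "comp_inv F"])
    show "multilinear g" using a by (simp add: mlin_iff_multilinear)
  qed (use a mcomp_comp_inv[of F, OF u] in auto)
qed

lemma Strans_eq_strans: assumes F: "multilinear F" and u: "bunit (F [])"
  shows "Strans sB (mprod mI F) = strans F"
  unfolding Strans_def mcinv_eq_comp_inv[OF assms]
proof (rule the_equality)
  show "comp_inv F = mprod mI (strans F)" by (simp add: comp_inv_def)
  fix S assume a: "comp_inv F = mprod mI S"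
  have "mprod mI S = mprod mI (strans F)" using a unfolding comp_inv_def by (rule sym)
  then show "S = strans F" by (rule mprod_mI_cancel)
qed

end

section \<open>The series \<open>U\<close>\<close>

lemma mprod_commute_of_geometric:
  assumes N: "\<And>xs. N xs = mone xs + mprod N X xs" and X0: "X [] = 0"
  shows "mprod X N = mprod N X"
proof -
  define Y where "Y = (\<lambda>xs. mone xs - X xs)"
  have NY: "mprod N Y = mone"
  proof
    fix xs show "mprod N Y xs = mone xs" using N[of xs] by (simp add: Y_def mprod_diff_right)
  qed
  have "bunit (Y [])" by (simp add: Y_def X0)
  then have "N = inv_series Y" by (rule mprod_inverse_unique[OF mprod_inv_series NY])
  with \<open>bunit (Y [])\<close> have YN: "mprod Y N = mone" by (simp add: mprod_inv_series)
  have "N xs - mprod X N xs = mone xs" for xs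
    using fun_cong[OF YN, of xs] by (simp add: Y_def mprod_diff_left)
  then have "mprod X N xs = mprod N X xs" for xs
    using N[of xs] by (simp add: algebra_simps)
  then show ?thesis by (simp add: fun_eq_iff)
qed

lemma subordination_of_mprod_mcomp:
  assumes N: "N = (\<lambda>xs. mone xs + mprod M mI xs)" and MK: "M = mprod N (mcomp K (mprod mI N))"
  shows "mprod mI M = mcomp (mprod mI K) (mprod mI N)"
    and "mprod M mI = mcomp (mprod K mI) (mprod mI N)"
proof -
  let ?\<Phi> = "mprod mI N"
  let ?G = "mcomp K ?\<Phi>"
  have \<Phi>: "mcomp mI ?\<Phi> = ?\<Phi>" by (simp add: mcomp_mI_left)
  show "mprod mI M = mcomp (mprod mI K) ?\<Phi>"
    by (subst MK) (simp only: mcomp_mprod \<Phi> mprod_assoc)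
  have MX: "mprod M mI = mprod N (mprod ?G mI)" by (subst MK) (simp only: mprod_assoc)
  have "N xs = mone xs + mprod N (mprod ?G mI) xs" for xs
  proof -
    have "N xs = mone xs + mprod M mI xs" by (simp add: N)
    then show ?thesis by (simp only: MX)
  qed
  then have "mprod (mprod ?G mI) N = mprod N (mprod ?G mI)"
    by (rule mprod_commute_of_geometric) simp
  then show "mprod M mI = mcomp (mprod K mI) ?\<Phi>"
    by (simp only: MX mcomp_mprod \<Phi> mprod_assoc)
qed

context scalars begin

definition Useries :: "('b list \<Rightarrow> 'b) \<Rightarrow> 'b list \<Rightarrow> 'b" where
  "Useries K = mcomp (mprod K mI) (mcinv sB (mprod mI K))"

lemma Strans_conj_mI_eq_Useries:
  assumes K: "multilinear K" and u: "bunit (K [])"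
  shows "mprod (mprod (minv sB (Strans sB (mprod mI K))) mI) (Strans sB (mprod mI K)) = Useries K"
proof -
  let ?S = "strans K"
  let ?\<psi> = "comp_inv K"
  let ?G = "mcomp K ?\<psi>"
  have linS: "multilinear ?S" by (rule multilinear_strans[OF K])
  have uS: "bunit (?S [])" by (rule bunit_strans[of K, OF u])
  have \<psi>: "mcomp mI ?\<psi> = ?\<psi>" by (simp add: mcomp_mI_left)
  have "mprod mI (mprod ?S ?G) = mprod mI mone"
  proof -
    have "mprod mI (mprod ?S ?G) = mprod ?\<psi> ?G" by (simp only: comp_inv_def mprod_assoc)
    also have "\<dots> = mprod (mcomp mI ?\<psi>) ?G" by (simp only: \<psi>)
    also have "\<dots> = mcomp (mprod mI K) ?\<psi>" by (simp only: mcomp_mprod)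
    also have "\<dots> = mI" by (rule mcomp_comp_inv[of K, OF u])
    finally show ?thesis by simp
  qed
  then have "mprod ?S ?G = mone" by (rule mprod_mI_cancel)
  then have G: "inv_series ?S = ?G" using mprod_inverse_unique mprod_inv_series_left[of ?S, OF uS] by blast
  have "Useries K = mprod ?G ?\<psi>" by (simp only: Useries_def mcinv_eq_comp_inv[OF K u] mcomp_mprod \<psi>)
  also have "\<dots> = mprod (mprod (inv_series ?S) mI) ?S" by (simp only: G comp_inv_def mprod_assoc)
  finally show ?thesis
    by (simp only: Strans_eq_strans[OF K u] minv_eq_inv_series[OF linS uS])
qed

lemma Useries_eq_of_subordination:
  assumes K: "multilinear K" "bunit (K [])" and M: "multilinear M" "bunit (M [])"
    and N: "multilinear N" "bunit (N [])"
    and IM: "mprod mI M = mcomp (mprod mI K) (mprod mI N)"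
    and MI: "mprod M mI = mcomp (mprod K mI) (mprod mI N)"
  shows "Useries K = Useries M"
proof -
  let ?\<Phi> = "mprod mI N"
  let ?\<phi> = "comp_inv N" and ?\<psi> = "comp_inv K"
  have lin: "multilinear (mprod K mI)" "multilinear (mprod M mI)"
    using K M by (simp_all add: multilinear_mprod multilinear_mI)
  have \<Phi>: "mcomp mI ?\<Phi> = ?\<Phi>" by (simp add: mcomp_mI_left)
  have "mcomp (mcomp ?\<phi> ?\<psi>) (mprod mI M) = mcomp ?\<phi> (mcomp (mcomp ?\<psi> (mprod mI K)) ?\<Phi>)"
    by (simp only: IM mcomp_assoc multilinear_comp_inv K N)
  also have "\<dots> = mI"
    by (simp only: mcomp_comp_inv_left K N \<Phi>)
  finally have "mcomp ?\<phi> ?\<psi> = comp_inv M"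
    by (intro mcomp_left_inverse_unique[OF _ _ mcomp_comp_inv[of M, OF M(2)]])
      (simp_all add: multilinear_mcomp multilinear_comp_inv K N)
  then have "Useries M = mcomp (mcomp (mprod M mI) ?\<phi>) ?\<psi>"
    by (simp add: Useries_def mcinv_eq_comp_inv M mcomp_assoc lin)
  also have "mcomp (mprod M mI) ?\<phi> = mprod K mI"
    by (simp only: MI mcomp_assoc lin mcomp_comp_inv[of N, OF N(2)] mcomp_mI_right)
  finally show ?thesis by (simp add: Useries_def mcinv_eq_comp_inv K)
qed

end

section \<open>Trees\<close>

definition trees :: "nat \<Rightarrow> ptree set" where
  "trees n = {\<tau>. tsize \<tau> = n}"

fun spine_length :: "ptree \<Rightarrow> nat" where
  "spine_length Lf = 0"
| "spine_length (Nd l r) = Suc (spine_length r)"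

text \<open>The comb is the only tree whose term in the moment-cumulant relation is the top cumulant.\<close>

fun comb :: "nat \<Rightarrow> ptree" where
  "comb 0 = Lf"
| "comb (Suc n) = Nd Lf (comb n)"

lemma tsize_comb[simp]: "tsize (comb n) = n"
  by (induction n) auto

lemma spine_length_le: "spine_length \<tau> \<le> tsize \<tau>"
  by (induction \<tau>) auto

lemma spine_length_eq_tsize_iff: "spine_length \<tau> = tsize \<tau> \<longleftrightarrow> \<tau> = comb (tsize \<tau>)"
proof (induction \<tau>)
  case Lf then show ?case by simp
next
  case (Nd l r)
  show ?case
  proof
    assume a: "spine_length (Nd l r) = tsize (Nd l r)"
    have "spine_length r \<le> tsize r" by (rule spine_length_le)
    with a have "tsize l = 0" "spine_length r = tsize r" by auto
    then have "l = Lf" by (cases l) auto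
    moreover have "r = comb (tsize r)" using Nd.IH(2) \<open>spine_length r = tsize r\<close> by simp
    ultimately show "Nd l r = comb (tsize (Nd l r))" using \<open>tsize l = 0\<close> by simp
  next
    assume h: "Nd l r = comb (tsize (Nd l r))"
    then have "l = Lf" by simp
    with h have "r = comb (tsize r)" by simp
    then show "spine_length (Nd l r) = tsize (Nd l r)" using Nd.IH(2) \<open>l = Lf\<close> by simp
  qed
qed

lemma trees_0[simp]: "trees 0 = {Lf}"
proof -
  have "tsize \<tau> = 0 \<longleftrightarrow> \<tau> = Lf" for \<tau> by (cases \<tau>) auto
  then show ?thesis by (auto simp: trees_def)
qed

lemma trees_Suc: "trees (Suc n) = (\<Union>j\<in>{0..n}. (\<lambda>(l, r). Nd l r) ` (trees j \<times> trees (n - j)))"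
proof (intro equalityI subsetI)
  fix \<tau> assume "\<tau> \<in> trees (Suc n)"
  then obtain l r where "\<tau> = Nd l r" "tsize l + tsize r = n" by (cases \<tau>) (auto simp: trees_def)
  then show "\<tau> \<in> (\<Union>j\<in>{0..n}. (\<lambda>(l, r). Nd l r) ` (trees j \<times> trees (n - j)))"
    by (auto simp: trees_def image_iff intro!: bexI[of _ "tsize l"])
next
  fix \<tau> assume "\<tau> \<in> (\<Union>j\<in>{0..n}. (\<lambda>(l, r). Nd l r) ` (trees j \<times> trees (n - j)))"
  then show "\<tau> \<in> trees (Suc n)" by (auto simp: trees_def)
qed

lemma finite_trees: "finite (trees n)"
proof (induction n rule: less_induct)
  case (less n)
  show ?case
  proof (cases n)
    case 0 then show ?thesis by simp
  next
    case (Suc m)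
    have "finite (trees j \<times> trees (m - j))" if "j \<le> m" for j
      using less Suc that by auto
    then show ?thesis unfolding Suc trees_Suc by auto
  qed
qed

lemma sum_trees_Suc:
  "sum F (trees (Suc n)) = (\<Sum>j=0..n. \<Sum>l\<in>trees j. \<Sum>r\<in>trees (n - j). F (Nd l r))"
proof -
  have "sum F (trees (Suc n)) = (\<Sum>j=0..n. sum F ((\<lambda>(l, r). Nd l r) ` (trees j \<times> trees (n - j))))"
    unfolding trees_Suc
  proof (rule sum.UNION_disjoint)
    show "\<forall>i\<in>{0..n}. finite ((\<lambda>(l, r). Nd l r) ` (trees i \<times> trees (n - i)))"
      by (simp add: finite_trees)
    show "\<forall>i\<in>{0..n}. \<forall>j\<in>{0..n}. i \<noteq> j \<longrightarrow> (\<lambda>(l, r). Nd l r) ` (trees i \<times> trees (n - i)) \<inter> (\<lambda>(l, r). Nd l r) ` (trees j \<times> trees (n - j)) = {}"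
      by (auto simp: trees_def)
  qed simp
  also have "\<dots> = (\<Sum>j=0..n. \<Sum>l\<in>trees j. \<Sum>r\<in>trees (n - j). F (Nd l r))"
  proof (rule sum.cong[OF refl])
    fix j
    have "inj_on (\<lambda>(l, r). Nd l r) (trees j \<times> trees (n - j))" by (auto simp: inj_on_def)
    then have "sum F ((\<lambda>(l, r). Nd l r) ` (trees j \<times> trees (n - j))) = (\<Sum>p\<in>trees j \<times> trees (n - j). F (Nd (fst p) (snd p)))"
      by (subst sum.reindex) (simp_all add: case_prod_beta o_def)
    also have "\<dots> = (\<Sum>l\<in>trees j. \<Sum>r\<in>trees (n - j). F (Nd l r))"
      by (simp add: sum.cartesian_product case_prod_beta finite_trees)
    finally show "sum F ((\<lambda>(l, r). Nd l r) ` (trees j \<times> trees (n - j))) = (\<Sum>l\<in>trees j. \<Sum>r\<in>trees (n - j). F (Nd l r))" .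
  qed
  finally show ?thesis .
qed

lemma length_kblocks[simp]: "length (kblocks kap la \<tau> as) = spine_length \<tau>"
  by (induction \<tau> arbitrary: as) auto

lemma ktree_Nd_kblocks: "ktree kap la (Nd l r) as = kap (kblocks kap la (Nd l r) as)"
  by simp

lemma kblocks_cong:
  assumes "\<And>ys. length ys \<le> m \<Longrightarrow> k1 ys = k2 ys" "tsize \<tau> \<le> Suc m"
  shows "kblocks k1 la \<tau> as = kblocks k2 la \<tau> as"
  using assms(2)
proof (induction \<tau> arbitrary: as)
  case Lf then show ?case by simp
next
  case (Nd l r)
  have "ktree k1 la l xs = ktree k2 la l xs" for xs
  proof (cases l)
    case Lf then show ?thesis by simp
  next
    case (Nd l1 l2)
    have "kblocks k1 la l xs = kblocks k2 la l xs" using Nd.IH(1) Nd.prems by simp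
    moreover have "spine_length l \<le> m" using spine_length_le[of l] Nd.prems by simp
    ultimately show ?thesis using Nd assms(1)[of "kblocks k2 la l xs"] by simp
  qed
  moreover have "kblocks k1 la r xs = kblocks k2 la r xs" for xs using Nd.IH(2) Nd.prems by simp
  ultimately show ?case by simp
qed

lemma ktree_cong:
  assumes "\<And>ys. length ys \<le> m \<Longrightarrow> k1 ys = k2 ys" "tsize \<tau> \<le> Suc m" "spine_length \<tau> \<le> m"
  shows "ktree k1 la \<tau> as = ktree k2 la \<tau> as"
proof (cases \<tau>)
  case Lf then show ?thesis by simp
next
  case (Nd l r)
  have "kblocks k1 la \<tau> as = kblocks k2 la \<tau> as" by (rule kblocks_cong[OF assms(1,2)])
  then show ?thesis using Nd assms(1)[of "kblocks k2 la \<tau> as"] assms(3) by simp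
qed

lemma kblocks_Nd_slot_in_left:
  assumes "length xs < tsize l"
  shows "kblocks kap la (Nd l r) (xs @ w # ys) =
    la (ktree kap la l (xs @ w # take (tsize l - length xs - 1) ys)) (ys ! (tsize l - length xs - 1))
    # kblocks kap la r (drop (tsize l - length xs) ys)"
proof -
  have "take (tsize l) (xs @ w # ys) = xs @ w # take (tsize l - length xs - 1) ys"
    "drop (tsize l + 1) (xs @ w # ys) = drop (tsize l - length xs) ys"
    using assms by (simp_all add: take_Cons' drop_Cons')
  moreover have "(xs @ w # ys) ! tsize l = ys ! (tsize l - length xs - 1)"
    using assms by (simp add: nth_append)
  ultimately show ?thesis by (simp only: kblocks.simps)
qed

lemma kblocks_Nd_slot_at_root:
  assumes "length xs = tsize l"
  shows "kblocks kap la (Nd l r) (xs @ w # ys) = la (ktree kap la l xs) w # kblocks kap la r ys"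
  using assms[symmetric] by (simp del: ktree.simps)

lemma kblocks_Nd_slot_in_right:
  assumes "tsize l < length xs"
  shows "kblocks kap la (Nd l r) (xs @ w # ys) =
    la (ktree kap la l (take (tsize l) xs)) (xs ! tsize l) # kblocks kap la r (drop (Suc (tsize l)) xs @ w # ys)"
  using assms by (simp add: nth_append del: ktree.simps)

lemma spine_length_less_of_not_comb: "\<tau> \<in> trees n - {comb n} \<Longrightarrow> spine_length \<tau> < n"
  using spine_length_le[of \<tau>] spine_length_eq_tsize_iff[of \<tau>] by (auto simp: trees_def)

lemma comb_in_trees: "comb n \<in> trees n" by (simp add: trees_def)

lemma sum_trees_not_comb_cong:
  assumes "\<And>ys. length ys < length as \<Longrightarrow> k1 ys = k2 ys"
  shows "(\<Sum>\<tau>\<in>trees (length as) - {comb (length as)}. ktree k1 la \<tau> as)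
       = (\<Sum>\<tau>\<in>trees (length as) - {comb (length as)}. ktree k2 la \<tau> as)"
proof (rule sum.cong[OF refl])
  fix \<tau> assume t: "\<tau> \<in> trees (length as) - {comb (length as)}"
  note spine = spine_length_less_of_not_comb[OF t]
  show "ktree k1 la \<tau> as = ktree k2 la \<tau> as"
  proof (rule ktree_cong[where m="length as - 1"])
    show "k1 ys = k2 ys" if "length ys \<le> length as - 1" for ys using assms that spine by simp
    show "tsize \<tau> \<le> Suc (length as - 1)" using t by (simp add: trees_def)
    show "spine_length \<tau> \<le> length as - 1" using spine by simp
  qed
qed

section \<open>\<open>B\<close>-valued probability spaces\<close>

locale bprob =
  fixes sB :: "'k::field_char_0 \<Rightarrow> 'b::ring_1 \<Rightarrow> 'b"
    and sA :: "'k \<Rightarrow> 'a::ring_1 \<Rightarrow> 'a"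
    and la :: "'b \<Rightarrow> 'a \<Rightarrow> 'a" and ra :: "'a \<Rightarrow> 'b \<Rightarrow> 'a"
    and E :: "'a \<Rightarrow> 'b"
  assumes space: "bprob_space sB sA la ra E"
begin

lemma kalgB: "kalg sB" using space by (simp add: bprob_space_def)
lemma kalgA: "kalg sA" using space by (simp add: bprob_space_def)

sublocale scalars sB by (unfold_locales) (rule kalgB)

lemma la_addB: "la (x + y) a = la x a + la y a" using space by (simp add: bprob_space_def)
lemma la_addA: "la x (a + b) = la x a + la x b" using space by (simp add: bprob_space_def)
lemma la_sB: "la (sB c x) a = sA c (la x a)" using space by (simp add: bprob_space_def)
lemma la_sA: "la x (sA c a) = sA c (la x a)" using space by (simp add: bprob_space_def)
lemma la_one: "la 1 a = a" using space by (simp add: bprob_space_def)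
lemma ra_one: "ra a 1 = a" using space by (simp add: bprob_space_def)
lemma la_mult: "la (x * y) a = la x (la y a)" using space by (simp add: bprob_space_def)
lemma la_Amult: "la x (a * b) = la x a * b" using space by (simp add: bprob_space_def)
lemma ra_la: "ra a x * b = a * la x b" using space by (simp add: bprob_space_def)
lemma E_add: "E (a + b) = E a + E b" using space by (simp add: bprob_space_def)
lemma E_sA: "E (sA c a) = sB c (E a)" using space by (simp add: bprob_space_def)
lemma E_one: "E 1 = 1" using space by (simp add: bprob_space_def)
lemma E_bimod: "E (la x (ra a y)) = x * E a * y" using space by (simp add: bprob_space_def)

lemma sA_ml: "sA c (x * y) = sA c x * y" using kalgA unfolding kalg_def by blast
lemma sA_mr: "sA c (x * y) = x * sA c y" using kalgA unfolding kalg_def by blast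

lemma E_la: "E (la x a) = x * E a"
  using E_bimod[of x a 1] by (simp add: ra_one)

lemma la_zeroB: "la 0 a = 0" using la_addB[of 0 0 a] by simp
lemma la_sumB: "la (sum f A) a = (\<Sum>i\<in>A. la (f i) a)"
  by (induction A rule: infinite_finite_induct) (simp_all add: la_zeroB la_addB)

definition klinearA :: "('a \<Rightarrow> 'b) \<Rightarrow> bool" where
  "klinearA T \<longleftrightarrow> (\<forall>c u v. T (sA c u + v) = sB c (T u) + T v)"
definition klinearAA :: "('a \<Rightarrow> 'a) \<Rightarrow> bool" where
  "klinearAA T \<longleftrightarrow> (\<forall>c u v. T (sA c u + v) = sA c (T u) + T v)"

lemma klinearA_map_add: "klinearA T \<Longrightarrow> T (u + v) = T u + T v"
proof -
  assume "klinearA T"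
  then have "T (sA 1 u + v) = sB 1 (T u) + T v" by (simp add: klinearA_def)
  moreover have "sA 1 u = u" using kalgA by (simp add: kalg_def)
  ultimately show ?thesis by (simp add: sB_one)
qed

lemma klinearA_map_zero: "klinearA T \<Longrightarrow> T 0 = 0"
  using klinearA_map_add[of T 0 0] by simp

lemma klinearA_map_sum: "klinearA T \<Longrightarrow> T (sum \<phi> A) = (\<Sum>i\<in>A. T (\<phi> i))"
  by (induction A rule: infinite_finite_induct) (simp_all add: klinearA_map_zero klinearA_map_add)

lemma klinearA_sum: "(\<And>i. i \<in> I \<Longrightarrow> klinearA (T i)) \<Longrightarrow> klinearA (\<lambda>w. \<Sum>i\<in>I. T i w)"
  unfolding klinearA_def
  by (induction I rule: infinite_finite_induct) (simp_all add: sB_add algebra_simps)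

lemma klinearA_diff: "klinearA T \<Longrightarrow> klinearA U \<Longrightarrow> klinearA (\<lambda>w. T w - U w)"
  by (simp add: klinearA_def sB_diff algebra_simps)

lemma klinearA_E: "klinearAA T \<Longrightarrow> klinearA (\<lambda>w. E (T w))"
  by (simp add: klinearA_def klinearAA_def E_add E_sA)

lemma klinearAA_la: "klinearAA (la t)"
  by (simp add: klinearAA_def la_addA la_sA)

lemma klinearAA_la_left: "klinearA T \<Longrightarrow> klinearAA (\<lambda>w. la (T w) z)"
  by (simp add: klinearAA_def klinearA_def la_addB la_sB)

lemma klinearAA_prod_list: "klinearAA (\<lambda>w. prod_list (xs @ w # ys))"
  unfolding klinearAA_def
proof (intro allI)
  fix c u v
  let ?P = "prod_list xs" and ?Q = "prod_list ys"
  have "sA c (?P * (u * ?Q)) = ?P * (sA c u * ?Q)" by (simp only: sA_mr[of c ?P] sA_ml[of c u ?Q])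
  then show "prod_list (xs @ (sA c u + v) # ys) = sA c (prod_list (xs @ u # ys)) + prod_list (xs @ v # ys)"
    by (simp add: distrib_left distrib_right)
qed

definition multilinearA_upto :: "nat \<Rightarrow> ('a list \<Rightarrow> 'b) \<Rightarrow> bool" where
  "multilinearA_upto m kap \<longleftrightarrow> (\<forall>ys zs. length ys + length zs + 1 \<le> m \<longrightarrow> klinearA (\<lambda>w. kap (ys @ w # zs)))"

lemma multilinearA_upto_slot:
  assumes "multilinearA_upto m kap" "length P + length Q + 1 \<le> m" "klinearAA e"
  shows "klinearA (\<lambda>w. kap (P @ e w # Q))"
  using assms unfolding multilinearA_upto_def klinearA_def klinearAA_def by simp

text \<open>Exactly one argument of the outer cumulant of \<open>\<kappa>\<^sub>\<tau>\<close> depends on a given argument of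
  \<open>\<kappa>\<^sub>\<tau>\<close>, and it does so linearly.\<close>

lemma kblocks_slot_klinearAA:
  assumes kap: "multilinearA_upto m kap"
  shows "tsize \<tau> \<le> Suc m \<Longrightarrow> length xs + length ys + 1 = tsize \<tau> \<Longrightarrow>
    \<exists>P Q e. (\<forall>w. kblocks kap la \<tau> (xs @ w # ys) = P @ e w # Q) \<and> length P + length Q + 1 = spine_length \<tau> \<and> klinearAA e"
proof (induction \<tau> arbitrary: xs ys)
  case Lf then show ?case by simp
next
  case (Nd l r)
  consider "length xs < tsize l" | "length xs = tsize l" | "tsize l < length xs" by linarith
  then show ?case
  proof cases
    case 1
    let ?i = "tsize l - length xs - 1"
    obtain l1 l2 where l: "l = Nd l1 l2" using 1 by (cases l) auto
    have "length xs + length (take ?i ys) + 1 = tsize l" using 1 Nd.prems by auto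
    then obtain P Q e where e: "\<forall>w. kblocks kap la l (xs @ w # take ?i ys) = P @ e w # Q"
      "length P + length Q + 1 = spine_length l" "klinearAA e"
      using Nd.IH(1)[of xs "take ?i ys"] Nd.prems by auto
    have "spine_length l \<le> m" using spine_length_le[of l] Nd.prems by simp
    then have "klinearA (\<lambda>w. kap (P @ e w # Q))" using multilinearA_upto_slot[OF kap _ e(3)] e(2) by simp
    then have "klinearA (\<lambda>w. ktree kap la l (xs @ w # take ?i ys))" using e(1) l by simp
    then have "klinearAA (\<lambda>w. la (ktree kap la l (xs @ w # take ?i ys)) (ys ! ?i))" by (rule klinearAA_la_left)
    then show ?thesis using kblocks_Nd_slot_in_left[OF 1, of kap la r]
      by (intro exI[of _ "[]"] exI[of _ "kblocks kap la r (drop (tsize l - length xs) ys)"]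
          exI[of _ "\<lambda>w. la (ktree kap la l (xs @ w # take ?i ys)) (ys ! ?i)"] conjI allI)
        (simp_all del: kblocks.simps)
  next
    case 2
    then show ?thesis
      by (intro exI[of _ "[]"] exI[of _ "kblocks kap la r ys"] exI[of _ "la (ktree kap la l xs)"] conjI allI)
        (simp_all add: kblocks_Nd_slot_at_root[OF 2] klinearAA_la del: kblocks.simps)
  next
    case 3
    have "length (drop (Suc (tsize l)) xs) + length ys + 1 = tsize r" using 3 Nd.prems by auto
    then obtain P Q e where e: "\<forall>w. kblocks kap la r (drop (Suc (tsize l)) xs @ w # ys) = P @ e w # Q"
      "length P + length Q + 1 = spine_length r" "klinearAA e"
      using Nd.IH(2)[of "drop (Suc (tsize l)) xs" ys] Nd.prems by auto
    then show ?thesis using kblocks_Nd_slot_in_right[OF 3, of kap la r]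
      by (intro exI[of _ "la (ktree kap la l (take (tsize l) xs)) (xs ! tsize l) # P"] exI[of _ Q] exI[of _ e] conjI allI)
        (simp_all del: kblocks.simps)
  qed
qed

lemma ktree_klinearA:
  assumes kap: "multilinearA_upto m kap" and "tsize \<tau> \<le> Suc m" "spine_length \<tau> \<le> m" "\<tau> \<noteq> Lf"
    and "length xs + length ys + 1 = tsize \<tau>"
  shows "klinearA (\<lambda>w. ktree kap la \<tau> (xs @ w # ys))"
proof -
  obtain P Q e where e: "\<forall>w. kblocks kap la \<tau> (xs @ w # ys) = P @ e w # Q" "length P + length Q + 1 = spine_length \<tau>" "klinearAA e"
    using kblocks_slot_klinearAA[OF kap assms(2,5)] by blast
  obtain l r where t: "\<tau> = Nd l r" using assms(4) by (cases \<tau>) auto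
  have "klinearA (\<lambda>w. kap (P @ e w # Q))" using multilinearA_upto_slot[OF kap _ e(3)] e(2) assms(3) by simp
  then show ?thesis using e(1) t by (simp only: ktree_Nd_kblocks)
qed

definition left_linear_upto :: "nat \<Rightarrow> ('a list \<Rightarrow> 'b) \<Rightarrow> bool" where
  "left_linear_upto m kap \<longleftrightarrow> (\<forall>b x rest. length rest < m \<longrightarrow> kap (la b x # rest) = b * kap (x # rest))"

lemma ktree_la_Cons:
  assumes ll: "left_linear_upto m kap"
  shows "\<tau> \<noteq> Lf \<Longrightarrow> tsize \<tau> \<le> Suc m \<Longrightarrow> spine_length \<tau> \<le> m \<Longrightarrow>
    ktree kap la \<tau> (la b x # rest) = b * ktree kap la \<tau> (x # rest)"
proof (induction \<tau> arbitrary: rest)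
  case Lf then show ?case by simp
next
  case (Nd l r)
  have len: "length (kblocks kap la r (drop (tsize l) rest)) < m" using Nd.prems by simp
  show ?case
  proof (cases l)
    case Lf
    then show ?thesis using ll len by (simp add: la_one left_linear_upto_def)
  next
    case (Nd l1 l2)
    obtain j' where j': "tsize l = Suc j'" using Nd by (cases "tsize l") auto
    let ?K = "kblocks kap la r (drop (Suc j') rest)"
    let ?t = "ktree kap la l (x # take j' rest)"
    have IHl: "ktree kap la l (la b x # take j' rest) = b * ?t"
      using Nd.IH(1)[of "take j' rest"] Nd.prems \<open>l = Nd l1 l2\<close> spine_length_le[of l] by simp
    have lK: "length ?K < m" using len j' by simp
    have "ktree kap la (Nd l r) (la b x # rest) = kap (la (ktree kap la l (la b x # take j' rest)) (rest ! j') # ?K)"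
      using j' by simp
    also have "\<dots> = kap (la b (la ?t (rest ! j')) # ?K)" by (simp only: IHl la_mult)
    also have "\<dots> = b * kap (la ?t (rest ! j') # ?K)" using ll lK by (simp add: left_linear_upto_def)
    also have "\<dots> = b * ktree kap la (Nd l r) (x # rest)" using j' by simp
    finally show ?thesis .
  qed
qed

section \<open>Cumulants\<close>

definition cum_step :: "('a list \<Rightarrow> 'b) \<Rightarrow> 'a list \<Rightarrow> 'b" where
  "cum_step kap as = (if as = [] then 0 else E (prod_list as) - (\<Sum>\<tau>\<in>trees (length as) - {comb (length as)}. ktree kap la \<tau> as))"

lemma cum_step_local:
  assumes "\<And>ys. length ys < length as \<Longrightarrow> k1 ys = k2 ys"
  shows "cum_step k1 as = cum_step k2 as"
  unfolding cum_step_def using sum_trees_not_comb_cong[of as k1 k2] assms by simp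

definition cum :: "'a list \<Rightarrow> 'b" where
  "cum = (SOME kap. \<forall>as. kap as = cum_step kap as)"

lemma cum_rec: "cum as = cum_step cum as"
proof -
  have "\<exists>kap. \<forall>as. kap as = cum_step kap as" by (rule length_recursion_exists) (rule cum_step_local)
  then have "\<forall>as. cum as = cum_step cum as" unfolding cum_def by (rule someI_ex)
  then show ?thesis by blast
qed

lemma cum_Nil: "cum [] = 0" by (subst cum_rec) (simp add: cum_step_def)

lemma ktree_comb: "length as = Suc n \<Longrightarrow> ktree kap la (comb (Suc n)) as = kap as"
proof -
  have kb: "\<forall>bs. length bs = k \<longrightarrow> kblocks kap la (comb k) bs = bs" for k
  proof (induction k)
    case 0 then show ?case by simp
  next
    case (Suc k)
    show ?case
    proof (intro allI impI)
      fix bs :: "'a list" assume "length bs = Suc k"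
      then obtain b bs' where "bs = b # bs'" "length bs' = k" by (cases bs) auto
      then show "kblocks kap la (comb (Suc k)) bs = bs" using Suc by (simp add: la_one)
    qed
  qed
  assume "length as = Suc n"
  then have "kblocks kap la (comb (Suc n)) as = as" using kb[of "Suc n"] by blast
  then show ?thesis by (simp only: comb.simps ktree_Nd_kblocks)
qed

lemma sum_trees_remove_comb:
  assumes "as \<noteq> []"
  shows "(\<Sum>\<tau>\<in>trees (length as). ktree kap la \<tau> as) = kap as + (\<Sum>\<tau>\<in>trees (length as) - {comb (length as)}. ktree kap la \<tau> as)"
proof -
  obtain n where n: "length as = Suc n" using assms by (cases as) auto
  have "(\<Sum>\<tau>\<in>trees (length as). ktree kap la \<tau> as) = ktree kap la (comb (length as)) as + (\<Sum>\<tau>\<in>trees (length as) - {comb (length as)}. ktree kap la \<tau> as)"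
    by (rule sum.remove[OF finite_trees comb_in_trees])
  then show ?thesis using ktree_comb[OF n] n by simp
qed

lemma E_prod_list_eq_sum_trees: "E (prod_list as) = (\<Sum>\<tau>\<in>trees (length as). ktree cum la \<tau> as)"
proof (cases "as = []")
  case True then show ?thesis by (simp add: E_one)
next
  case False
  show ?thesis using cum_rec[of as] False by (simp add: sum_trees_remove_comb cum_step_def)
qed

lemma eq_cum_of_moment_cumulant_relation:
  assumes rel: "\<And>as. E (prod_list as) = (\<Sum>\<tau>\<in>trees (length as). ktree kap la \<tau> as)" and "kap [] = 0"
  shows "kap as = cum as"
proof (induction "length as" arbitrary: as rule: less_induct)
  case less
  show ?case
  proof (cases "as = []")
    case True then show ?thesis using \<open>kap [] = 0\<close> cum_Nil by simp
  next
    case False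
    let ?S = "\<lambda>k. \<Sum>\<tau>\<in>trees (length as) - {comb (length as)}. ktree k la \<tau> as"
    have "kap as + ?S kap = E (prod_list as)"
      using rel[of as] sum_trees_remove_comb[OF False, of kap] by simp
    also have "\<dots> = cum as + ?S cum"
      using E_prod_list_eq_sum_trees[of as] sum_trees_remove_comb[OF False, of cum] by simp
    finally have "kap as + ?S kap = cum as + ?S cum" .
    moreover have "?S kap = ?S cum"
      by (rule sum_trees_not_comb_cong) (rule less)
    ultimately show ?thesis by simp
  qed
qed

lemma cumulants_eq_cum: "cumulants la E = cum"
  unfolding cumulants_def
proof (rule the_equality)
  show "cum [] = 0 \<and> (\<forall>as. E (prod_list as) = (\<Sum>\<tau>\<in>{\<tau>. tsize \<tau> = length as}. ktree cum la \<tau> as))"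
    using cum_Nil E_prod_list_eq_sum_trees by (simp add: trees_def)
  fix kap assume a: "kap [] = 0 \<and> (\<forall>as. E (prod_list as) = (\<Sum>\<tau>\<in>{\<tau>. tsize \<tau> = length as}. ktree kap la \<tau> as))"
  have "kap as = cum as" for as
    by (rule eq_cum_of_moment_cumulant_relation) (use a in \<open>simp_all add: trees_def\<close>)
  then show "kap = cum" ..
qed

lemma cum_multilinearA_upto: "multilinearA_upto n cum"
proof (induction n)
  case 0 then show ?case by (simp add: multilinearA_upto_def)
next
  case (Suc n)
  show ?case unfolding multilinearA_upto_def
  proof (intro allI impI)
    fix ys zs :: "'a list" assume len: "length ys + length zs + 1 \<le> Suc n"
    show "klinearA (\<lambda>w. cum (ys @ w # zs))"
    proof (cases "length ys + length zs + 1 \<le> n")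
      case True then show ?thesis using Suc by (simp add: multilinearA_upto_def)
    next
      case False
      then have L: "length ys + length zs + 1 = Suc n" using len by simp
      have "klinearA (\<lambda>w. E (prod_list (ys @ w # zs)) - (\<Sum>\<tau>\<in>trees (Suc n) - {comb (Suc n)}. ktree cum la \<tau> (ys @ w # zs)))"
      proof (intro klinearA_diff klinearA_E klinearAA_prod_list klinearA_sum)
        fix \<tau> assume t: "\<tau> \<in> trees (Suc n) - {comb (Suc n)}"
        show "klinearA (\<lambda>w. ktree cum la \<tau> (ys @ w # zs))"
        proof (rule ktree_klinearA[OF Suc.IH])
          show "tsize \<tau> \<le> Suc n" using t by (simp add: trees_def)
          show "spine_length \<tau> \<le> n" using spine_length_less_of_not_comb[OF t] by simp
          show "\<tau> \<noteq> Lf" using t by (auto simp: trees_def)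
          show "length ys + length zs + 1 = tsize \<tau>" using t L by (simp add: trees_def)
        qed
      qed
      moreover have "cum (ys @ w # zs) = E (prod_list (ys @ w # zs)) - (\<Sum>\<tau>\<in>trees (Suc n) - {comb (Suc n)}. ktree cum la \<tau> (ys @ w # zs))" for w
        using cum_rec[of "ys @ w # zs"] L by (simp add: cum_step_def)
      ultimately show ?thesis by simp
    qed
  qed
qed

lemma cum_klinearA: "klinearA (\<lambda>w. cum (ys @ w # zs))"
  using cum_multilinearA_upto[of "length ys + length zs + 1"] by (simp add: multilinearA_upto_def)

lemma E_prod_list_la_Cons: "E (prod_list (la b x # rest)) = b * E (prod_list (x # rest))"
  by (simp add: la_Amult[symmetric] E_la)

lemma cum_la_Cons: "cum (la b x # rest) = b * cum (x # rest)"
proof (induction "length rest" arbitrary: b x rest rule: less_induct)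
  case less
  then have IH: "left_linear_upto (length rest) cum" by (simp add: left_linear_upto_def)
  let ?T = "trees (Suc (length rest)) - {comb (Suc (length rest))}"
  have "ktree cum la \<tau> (la b x # rest) = b * ktree cum la \<tau> (x # rest)" if "\<tau> \<in> ?T" for \<tau>
    using that spine_length_less_of_not_comb[OF that] by (intro ktree_la_Cons[OF IH]) (auto simp: trees_def)
  then have trees: "(\<Sum>\<tau>\<in>?T. ktree cum la \<tau> (la b x # rest)) = b * (\<Sum>\<tau>\<in>?T. ktree cum la \<tau> (x # rest))"
    by (simp add: sum_distrib_left)
  have "cum (la b x # rest) = E (prod_list (la b x # rest)) - (\<Sum>\<tau>\<in>?T. ktree cum la \<tau> (la b x # rest))"
    using cum_rec[of "la b x # rest"] by (simp add: cum_step_def)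
  also have "\<dots> = b * (E (prod_list (x # rest)) - (\<Sum>\<tau>\<in>?T. ktree cum la \<tau> (x # rest)))"
    by (simp only: E_prod_list_la_Cons trees right_diff_distrib)
  also have "\<dots> = b * cum (x # rest)"
    using cum_rec[of "x # rest"] by (simp add: cum_step_def)
  finally show ?case .
qed

end

section \<open>The moment-cumulant relation along right spines\<close>

context bprob begin

text \<open>A block \<open>b\<^sub>1 \<dots> b\<^sub>n\<close> of the right spine of a tree contributes the argument
  \<open>E(b\<^sub>1 \<cdots> b\<^sub>n\<^sub>-\<^sub>1) b\<^sub>n\<close> to the outermost cumulant, once the trees hanging off the spine are
  summed over.\<close>

definition spine_arg :: "'a list \<Rightarrow> 'a" where
  "spine_arg b = la (E (prod_list (butlast b))) (last b)"

lemma sum_trees_cum_spine_node: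
  assumes "j < length ys"
  shows "(\<Sum>l\<in>trees j. cum (P @ la (ktree cum la l (take j ys)) (ys ! j) # Q))
       = cum (P @ spine_arg (take (Suc j) ys) # Q)"
proof -
  have "(\<Sum>l\<in>trees j. cum (P @ la (ktree cum la l (take j ys)) (ys ! j) # Q))
      = cum (P @ la (\<Sum>l\<in>trees j. ktree cum la l (take j ys)) (ys ! j) # Q)"
    using klinearA_map_sum[OF cum_klinearA[of P Q], of "\<lambda>l. la (ktree cum la l (take j ys)) (ys ! j)" "trees j"]
    by (simp add: la_sumB)
  also have "(\<Sum>l\<in>trees j. ktree cum la l (take j ys)) = E (prod_list (take j ys))"
    using E_prod_list_eq_sum_trees[of "take j ys"] assms by simp
  also have "la (E (prod_list (take j ys))) (ys ! j) = spine_arg (take (Suc j) ys)"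
    using assms by (simp add: spine_arg_def take_Suc_conv_app_nth)
  finally show ?thesis .
qed

lemma sum_trees_kblocks_eq_sum_blocks:
  "(\<Sum>r\<in>trees (length zs). cum (P @ kblocks cum la r zs)) = (\<Sum>bs\<in>blocks zs. cum (P @ map spine_arg bs))"
proof (induction "length zs" arbitrary: zs P rule: less_induct)
  case less
  show ?case
  proof (cases zs)
    case Nil then show ?thesis by simp
  next
    case (Cons x xs)
    let ?n = "length xs"
    have "(\<Sum>r\<in>trees (length zs). cum (P @ kblocks cum la r zs))
        = (\<Sum>j=0..?n. \<Sum>l\<in>trees j. \<Sum>r\<in>trees (?n - j). cum (P @ kblocks cum la (Nd l r) (x#xs)))"
      using Cons by (simp add: sum_trees_Suc)
    also have "\<dots> = (\<Sum>j=0..?n. \<Sum>l\<in>trees j. \<Sum>r\<in>trees (length (drop j xs)).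
        cum ((P @ [la (ktree cum la l (take j (x#xs))) ((x#xs) ! j)]) @ kblocks cum la r (drop j xs)))"
    proof (intro sum.cong refl)
      fix j l r assume "l \<in> trees j"
      then have "tsize l = j" by (simp add: trees_def)
      then show "cum (P @ kblocks cum la (Nd l r) (x#xs)) = cum ((P @ [la (ktree cum la l (take j (x#xs))) ((x#xs) ! j)]) @ kblocks cum la r (drop j xs))"
        by simp
    qed simp
    also have "\<dots> = (\<Sum>j=0..?n. \<Sum>l\<in>trees j. \<Sum>bs\<in>blocks (drop j xs).
        cum ((P @ [la (ktree cum la l (take j (x#xs))) ((x#xs) ! j)]) @ map spine_arg bs))"
      by (intro sum.cong refl less) (simp add: Cons)
    also have "\<dots> = (\<Sum>j=0..?n. \<Sum>bs\<in>blocks (drop j xs). \<Sum>l\<in>trees j.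
        cum (P @ la (ktree cum la l (take j (x#xs))) ((x#xs) ! j) # map spine_arg bs))"
      by (intro sum.cong refl) (simp add: sum.swap[of _ "trees _"])
    also have "\<dots> = (\<Sum>j=0..?n. \<Sum>bs\<in>blocks (drop j xs).
        cum (P @ spine_arg (x # take j xs) # map spine_arg bs))"
      using sum_trees_cum_spine_node[of _ "x # xs"] by (intro sum.cong refl) simp
    also have "\<dots> = (\<Sum>bs\<in>blocks zs. cum (P @ map spine_arg bs))"
      using Cons by (simp add: sum_blocks_Cons)
    finally show ?thesis .
  qed
qed

lemma E_prod_list_eq_sum_blocks:
  assumes "zs \<noteq> []"
  shows "E (prod_list zs) = (\<Sum>bs\<in>blocks zs. cum (map spine_arg bs))"
proof -
  have "E (prod_list zs) = (\<Sum>\<tau>\<in>trees (length zs). cum ([] @ kblocks cum la \<tau> zs))"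
    unfolding E_prod_list_eq_sum_trees
  proof (rule sum.cong[OF refl])
    fix \<tau> assume "\<tau> \<in> trees (length zs)"
    then obtain l r where "\<tau> = Nd l r" using assms by (cases \<tau>) (auto simp: trees_def)
    then show "ktree cum la \<tau> zs = cum ([] @ kblocks cum la \<tau> zs)" by simp
  qed
  then show ?thesis using sum_trees_kblocks_eq_sum_blocks[of "[]" zs] by simp
qed

lemma cum_singleton: "cum [x] = E x"
  using E_prod_list_eq_sum_blocks[of "[x]"] by (simp add: blocks_Cons spine_arg_def E_one la_one)

lemma mword_eq_prod_list: "foldl (\<lambda>w x. ra w x * a) w0 ys = w0 * prod_list (map (\<lambda>x. la x a) ys)"
  by (induction ys arbitrary: w0) (simp_all add: ra_la mult.assoc)

lemma Mser_eq: "Mser ra E a ys = E (prod_list (a # map (\<lambda>x. la x a) ys))"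
  by (simp add: Mser_def mword_def mword_eq_prod_list)

lemma Kser_eq: "Kser la E a ys = cum (a # map (\<lambda>x. la x a) ys)"
  by (simp add: Kser_def cumulants_eq_cum)

lemma Mser_Nil: "Mser ra E a [] = E a" by (simp add: Mser_eq)
lemma Kser_Nil: "Kser la E a [] = E a" by (simp add: Kser_eq cum_singleton)

lemma klinear_la_arg: "klinearA G \<Longrightarrow> klinear (\<lambda>w. G (la w a))"
  by (simp add: klinear_def klinearA_def la_addB la_sB)

lemma multilinear_Mser: "multilinear (Mser ra E a)"
  unfolding multilinear_def
proof (intro allI)
  fix xs ys :: "'b list"
  have "klinearA (\<lambda>w. E (prod_list ((a # map (\<lambda>x. la x a) xs) @ w # map (\<lambda>x. la x a) ys)))"
    by (intro klinearA_E klinearAA_prod_list)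
  then show "klinear (\<lambda>w. Mser ra E a (xs @ w # ys))"
    using klinear_la_arg by (simp add: Mser_eq)
qed

lemma multilinear_Kser: "multilinear (Kser la E a)"
  unfolding multilinear_def
proof (intro allI)
  fix xs ys :: "'b list"
  have "klinearA (\<lambda>w. cum ((a # map (\<lambda>x. la x a) xs) @ w # map (\<lambda>x. la x a) ys))"
    by (rule cum_klinearA)
  then show "klinear (\<lambda>w. Kser la E a (xs @ w # ys))"
    using klinear_la_arg by (simp add: Kser_eq)
qed

definition Nser :: "'a \<Rightarrow> 'b list \<Rightarrow> 'b" where
  "Nser a = (\<lambda>xs. mone xs + mprod (Mser ra E a) mI xs)"

lemma multilinear_Nser: "multilinear (Nser a)"
  by (simp add: Nser_def multilinear_add multilinear_mone multilinear_mprod multilinear_Mser multilinear_mI)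

lemma Nser_Nil: "Nser a [] = 1"
  by (simp add: Nser_def)

lemma spine_arg_la_Cons: "spine_arg (la x b # bs) = la x (spine_arg (b # bs))"
proof (cases "bs = []")
  case True then show ?thesis by (simp add: spine_arg_def E_one la_one)
next
  case False
  have "E (prod_list (la x b # butlast bs)) = x * E (prod_list (b # butlast bs))"
    by (simp add: la_Amult[symmetric] E_la)
  then show ?thesis using False by (simp add: spine_arg_def la_mult)
qed

lemma spine_arg_moments: "spine_arg (a # map (\<lambda>x. la x a) c) = la (Nser a c) a"
proof (cases "c = []")
  case True then show ?thesis by (simp add: spine_arg_def Nser_Nil E_one)
next
  case False
  then have "spine_arg (a # map (\<lambda>x. la x a) c) = la (Mser ra E a (butlast c) * last c) a"
    by (simp add: spine_arg_def Mser_eq map_butlast[symmetric] last_map la_mult)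
  then show ?thesis using False by (simp add: Nser_def mprod_mI_right mone_def)
qed

lemma spine_arg_map_la: "b \<noteq> [] \<Longrightarrow> spine_arg (map (\<lambda>x. la x a) b) = la (mprod mI (Nser a) b) a"
  by (cases b) (simp_all add: spine_arg_la_Cons spine_arg_moments la_mult)

lemma Mser_eq_mprod_Nser_mcomp_Kser:
  "Mser ra E a = mprod (Nser a) (mcomp (Kser la E a) (mprod mI (Nser a)))"
proof
  fix xs :: "'b list"
  let ?h = "\<lambda>x. la x a" and ?N = "Nser a" and ?\<Phi> = "mprod mI (Nser a)"
  have blocks: "map spine_arg (map (map ?h) bss) = map ?h (map ?\<Phi> bss)" if "bss \<in> blocks ys" for bss ys
  proof -
    have "[] \<notin> set bss" using that by (simp add: blocks_def)
    then show ?thesis by (induction bss) (auto simp: spine_arg_map_la)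
  qed
  have "Mser ra E a xs = (\<Sum>bs\<in>blocks (a # map ?h xs). cum (map spine_arg bs))"
    unfolding Mser_eq by (rule E_prod_list_eq_sum_blocks) simp
  also have "\<dots> = (\<Sum>k=0..length xs. \<Sum>bss\<in>blocks (drop k xs).
      cum (spine_arg (a # map ?h (take k xs)) # map spine_arg (map (map ?h) bss)))"
    by (simp add: sum_blocks_Cons drop_map take_map sum_blocks_map)
  also have "\<dots> = (\<Sum>k=0..length xs. ?N (take k xs) * mcomp (Kser la E a) ?\<Phi> (drop k xs))"
  proof (rule sum.cong[OF refl])
    fix k
    have "cum (spine_arg (a # map ?h (take k xs)) # map spine_arg (map (map ?h) bss))
        = ?N (take k xs) * cum (a # map ?h (map ?\<Phi> bss))" if "bss \<in> blocks (drop k xs)" for bss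
      by (simp only: blocks[OF that] spine_arg_moments cum_la_Cons)
    then show "(\<Sum>bss\<in>blocks (drop k xs). cum (spine_arg (a # map ?h (take k xs)) # map spine_arg (map (map ?h) bss)))
        = ?N (take k xs) * mcomp (Kser la E a) ?\<Phi> (drop k xs)"
      by (simp add: mcomp_blocks Kser_eq sum_distrib_left)
  qed
  also have "\<dots> = mprod ?N (mcomp (Kser la E a) ?\<Phi>) xs"
    by (simp add: mprod_def)
  finally show "Mser ra E a xs = mprod ?N (mcomp (Kser la E a) ?\<Phi>) xs" .
qed

end

theorem lemma4:
  fixes sB :: "'k::field_char_0 \<Rightarrow> 'b::ring_1 \<Rightarrow> 'b"
    and sA :: "'k \<Rightarrow> 'a::ring_1 \<Rightarrow> 'a"
    and la :: "'b \<Rightarrow> 'a \<Rightarrow> 'a" and ra :: "'a \<Rightarrow> 'b \<Rightarrow> 'a"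
    and E :: "'a \<Rightarrow> 'b" and a :: 'a
  assumes "bprob_space sB sA la ra E"
    and "bunit (E a)"
  shows "mprod (mprod (minv sB (Sa sB la E a)) mI) (Sa sB la E a)
           = mcomp (mprod (Kser la E a) mI) (mcinv sB (mprod mI (Kser la E a)))
       \<and> mcomp (mprod (Kser la E a) mI) (mcinv sB (mprod mI (Kser la E a)))
           = mcomp (mprod (Mser ra E a) mI) (mcinv sB (mprod mI (Mser ra E a)))"
proof -
  interpret bprob sB sA la ra E by (rule bprob.intro) (rule assms(1))
  have K: "multilinear (Kser la E a)" "bunit (Kser la E a [])"
    using assms(2) by (simp_all add: multilinear_Kser Kser_Nil)
  have M: "multilinear (Mser ra E a)" "bunit (Mser ra E a [])"
    using assms(2) by (simp_all add: multilinear_Mser Mser_Nil)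
  have N: "multilinear (Nser a)" "bunit (Nser a [])"
    by (simp_all add: multilinear_Nser Nser_Nil)
  have "Useries (Kser la E a) = Useries (Mser ra E a)"
    by (rule Useries_eq_of_subordination[OF K M N
          subordination_of_mprod_mcomp[OF Nser_def Mser_eq_mprod_Nser_mcomp_Kser]])
  moreover have "mprod (mprod (minv sB (Sa sB la E a)) mI) (Sa sB la E a) = Useries (Kser la E a)"
    unfolding Sa_def kser_def using K by (rule Strans_conj_mI_eq_Useries)
  ultimately show ?thesis by (simp add: Useries_def)
qed

end
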